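(* Let $K$ be a real algebraic number field (a subfield of $\mathbb{R}$ of finite degree over $\mathbb{Q}$). Let $\wp_K$ be the set of Pisot numbers $\theta\in K$ with $\mathbb{Q}(\theta)=K$, listed increasingly as $\theta_1<\theta_2<\theta_3<\cdots$. Let $$D_K:=\{\theta_n-\theta_m \mid (m,n)\in\mathbb{N}^2,\ n>m\}=\{\alpha-\alpha' \mid \alpha,\alpha'\in\wp_K,\ \alpha>\alpha'\},\qquad \mathcal{F}_K:=\{\theta_{n+1}-\theta_n\mid n\in\mathbb{N}\}.$$ Then: (i) $1\in D_K$; (ii) $\wp_K\subsetneq D_K$; (iii) if $K\neq\mathbb{Q}$, then the set $D_K\setminus\wp_K$ is infinite, and $\mathcal{F}_K$ has at least two elements.
   Context: A Pisot number is a real algebraic integer greater than $1$ all of whose other conjugates (over $\mathbb{Q}$) have modulus less than $1$. The set $\wp_K$ is infinite and discrete in $[1,\infty)$, so it can be enumerated increasingly. Note $\wp_K-\wp_K=(-D_K)\cup\{0\}\cup D_K$. *)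

theory Defs
  imports "HOL-Computational_Algebra.Polynomial" Complex_Main
begin

definition real_subfield :: "real set \<Rightarrow> bool" where
  "real_subfield K \<longleftrightarrow> 0 \<in> K \<and> 1 \<in> K \<and>
     (\<forall>x\<in>K. \<forall>y\<in>K. x + y \<in> K \<and> x * y \<in> K) \<and>
     (\<forall>x\<in>K. - x \<in> K) \<and> (\<forall>x\<in>K. x \<noteq> 0 \<longrightarrow> inverse x \<in> K)"

definition real_number_field :: "real set \<Rightarrow> bool" where
  "real_number_field K \<longleftrightarrow> real_subfield K \<and>
     (\<exists>B. finite B \<and> B \<subseteq> K \<and>
        (\<forall>x\<in>K. \<exists>c :: real \<Rightarrow> rat. x = (\<Sum>b\<in>B. of_rat (c b) * b)))"

definition gen_field :: "real \<Rightarrow> real set" where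
  "gen_field \<theta> = \<Inter> {F. real_subfield F \<and> \<theta> \<in> F}"

definition pisot :: "real \<Rightarrow> bool" where
  "pisot \<theta> \<longleftrightarrow> \<theta> > 1 \<and>
     (\<exists>p :: int poly. lead_coeff p = 1 \<and> irreducible p \<and>
        poly (map_poly (of_int :: int \<Rightarrow> real) p) \<theta> = 0 \<and>
        (\<forall>z :: complex. poly (map_poly (of_int :: int \<Rightarrow> complex) p) z = 0 \<and> z \<noteq> complex_of_real \<theta> \<longrightarrow> cmod z < 1))"

definition pisot_set :: "real set \<Rightarrow> real set" where
  "pisot_set K = {\<theta> \<in> K. pisot \<theta> \<and> gen_field \<theta> = K}"

definition diff_set :: "real set \<Rightarrow> real set" where
  "diff_set K = {\<alpha> - \<alpha>' | \<alpha> \<alpha>'. \<alpha> \<in> pisot_set K \<and> \<alpha>' \<in> pisot_set K \<and> \<alpha> > \<alpha>'}"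

text \<open>F_K: differences theta_(n+1) - theta_n of consecutive elements of wp_K
  (in its increasing enumeration).\<close>
definition gap_set :: "real set \<Rightarrow> real set" where
  "gap_set K = {\<beta> - \<alpha> | \<alpha> \<beta>. \<alpha> \<in> pisot_set K \<and> \<beta> \<in> pisot_set K \<and> \<alpha> < \<beta> \<and>
                  \<not> (\<exists>\<gamma>\<in>pisot_set K. \<alpha> < \<gamma> \<and> \<gamma> < \<beta>)}"

end

(* Every real number field K has a generator \<theta> that is an algebraic integer. Siegel's lemma gives
   a nonzero f \<in> \<int>[X] of degree < deg \<theta> that is small at all other conjugates of \<theta>; the norm of
   f(\<theta>) is a nonzero integer, so |f(\<theta>)| \<ge> 1 and 2 f(\<theta>)\<^sup>2 is a Pisot number generating K.

   For a Pisot generator \<theta> and suitable exponents a, b (the other conjugates z have |z|\<^sup>a tiny and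
   z\<^sup>a pointing roughly along the positive reals), \<alpha> = \<theta>\<^sup>a\<^sup>+\<^sup>b - \<theta>\<^sup>a, \<alpha> + 1 and \<theta> + \<alpha> are again
   Pisot numbers generating K; hence 1 and \<theta> lie in D_K. If K \<noteq> \<rat>, \<theta> has a conjugate z\<^sub>0 in the
   unit disc, and for a' much larger than a the conjugate of (\<alpha>' + 1) - \<alpha> at z\<^sub>0 has real part > 1
   but modulus < 2, so these differences are not Pisot. Finally the Pisot numbers of K are
   discrete (bounded degree and bounded conjugates leave finitely many minimal polynomials), so if
   all consecutive gaps were equal to d, both 1 and \<theta> would be multiples of d, forcing \<theta> \<in> \<rat>. *)

theory Submission
  imports Defs "Berlekamp_Zassenhaus.Factor_Bound" "Jordan_Normal_Form.Char_Poly"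
begin

abbreviation ipoly :: "int poly \<Rightarrow> 'a::comm_ring_1 \<Rightarrow> 'a" where
  "ipoly p \<equiv> poly (of_int_poly p)"

interpretation complex_of_real_poly: map_poly_idom_hom complex_of_real ..
interpretation complex_of_rat_poly: map_poly_idom_hom "of_rat :: rat \<Rightarrow> complex" ..

lemma real_subfieldD:
  assumes "real_subfield F"
  shows "0 \<in> F" "1 \<in> F" "x \<in> F \<Longrightarrow> y \<in> F \<Longrightarrow> x + y \<in> F"
    "x \<in> F \<Longrightarrow> y \<in> F \<Longrightarrow> x * y \<in> F" "x \<in> F \<Longrightarrow> - x \<in> F"
    "x \<in> F \<Longrightarrow> inverse x \<in> F"
  using assms unfolding real_subfield_def by (auto simp: inverse_eq_divide)

lemma real_subfield_diff: "real_subfield F \<Longrightarrow> x \<in> F \<Longrightarrow> y \<in> F \<Longrightarrow> x - y \<in> F"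
  using real_subfieldD[of F] by (metis diff_conv_add_uminus)

lemma real_subfield_divide: "real_subfield F \<Longrightarrow> x \<in> F \<Longrightarrow> y \<in> F \<Longrightarrow> x / y \<in> F"
  using real_subfieldD[of F] by (metis divide_inverse)

lemma real_subfield_of_nat: "real_subfield F \<Longrightarrow> real n \<in> F"
  by (induction n) (auto intro: real_subfieldD)

lemma real_subfield_of_int:
  assumes F: "real_subfield F"
  shows "real_of_int n \<in> F"
proof (cases "n \<ge> 0")
  case True
  then show ?thesis using real_subfield_of_nat[OF F, of "nat n"] by simp
next
  case False
  then show ?thesis using real_subfield_of_nat[OF F, of "nat (- n)"] real_subfieldD(5)[OF F] by force
qed

lemma real_subfield_of_rat: "real_subfield F \<Longrightarrow> of_rat r \<in> F"
  by (cases r) (auto simp: Fract_of_int_quotient of_rat_divide intro: real_subfield_divide real_subfield_of_int)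

lemma Rats_subset_real_subfield: "real_subfield F \<Longrightarrow> \<rat> \<subseteq> F"
  by (auto elim!: Rats_cases intro: real_subfield_of_rat)

lemma real_subfield_sum: "real_subfield F \<Longrightarrow> (\<And>i. i \<in> A \<Longrightarrow> f i \<in> F) \<Longrightarrow> sum f A \<in> F"
  by (induction A rule: infinite_finite_induct) (auto intro: real_subfieldD)

lemma real_subfield_power: "real_subfield F \<Longrightarrow> x \<in> F \<Longrightarrow> x ^ n \<in> F"
  by (induction n) (auto intro: real_subfieldD)

lemma real_subfield_ipoly: "real_subfield F \<Longrightarrow> x \<in> F \<Longrightarrow> ipoly f x \<in> F"
  unfolding poly_altdef
  by (intro real_subfield_sum real_subfieldD(4) real_subfield_power) (auto simp: real_subfield_of_int)

lemma real_subfield_Rats: "real_subfield \<rat>"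
  unfolding real_subfield_def by auto

lemma real_number_field_subfield: "real_number_field K \<Longrightarrow> real_subfield K"
  unfolding real_number_field_def by simp

lemma real_subfield_gen_field: "real_subfield (gen_field x)"
  unfolding gen_field_def real_subfield_def by auto

lemma gen_field_self: "x \<in> gen_field x"
  unfolding gen_field_def by auto

lemma gen_field_least: "real_subfield F \<Longrightarrow> x \<in> F \<Longrightarrow> gen_field x \<subseteq> F"
  unfolding gen_field_def by auto

lemma gen_field_eqI: "x \<in> gen_field y \<Longrightarrow> y \<in> gen_field x \<Longrightarrow> gen_field x = gen_field y"
  by (meson gen_field_least real_subfield_gen_field subset_antisym)

lemma gen_field_Rats: "x \<in> \<rat> \<Longrightarrow> gen_field x = \<rat>"
  by (meson Rats_subset_real_subfield gen_field_least real_subfield_Rats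
      real_subfield_gen_field subset_antisym)

definition is_subring :: "'a::field set \<Rightarrow> bool" where
  "is_subring S \<longleftrightarrow> 0 \<in> S \<and> 1 \<in> S \<and> (\<forall>x\<in>S. \<forall>y\<in>S. x + y \<in> S \<and> x * y \<in> S) \<and> (\<forall>x\<in>S. - x \<in> S)"

definition coeffs_in :: "'a::zero set \<Rightarrow> 'a poly \<Rightarrow> bool" where
  "coeffs_in S p \<longleftrightarrow> (\<forall>i. Polynomial.coeff p i \<in> S)"

lemma is_subringD:
  assumes "is_subring S"
  shows "0 \<in> S" "1 \<in> S" "x \<in> S \<Longrightarrow> y \<in> S \<Longrightarrow> x + y \<in> S"
    "x \<in> S \<Longrightarrow> y \<in> S \<Longrightarrow> x * y \<in> S" "x \<in> S \<Longrightarrow> - x \<in> S"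
    "x \<in> S \<Longrightarrow> y \<in> S \<Longrightarrow> x - y \<in> S"
  using assms unfolding is_subring_def
  by (simp, simp, blast, blast, blast, metis diff_conv_add_uminus)

lemma is_subring_sum: "is_subring S \<Longrightarrow> (\<And>i. i \<in> A \<Longrightarrow> f i \<in> S) \<Longrightarrow> sum f A \<in> S"
  by (induction A rule: infinite_finite_induct) (auto intro: is_subringD)

lemma is_subring_real_subfield: "real_subfield F \<Longrightarrow> is_subring F"
  unfolding is_subring_def by (auto intro: real_subfieldD)

lemma is_subring_Ints: "is_subring (\<int> :: 'a::field set)"
  unfolding is_subring_def by auto

lemma coeffs_in_0 [simp]: "is_subring S \<Longrightarrow> coeffs_in S 0"
  unfolding coeffs_in_def using is_subringD(1)[of S] by auto

lemma coeffs_in_add: "is_subring S \<Longrightarrow> coeffs_in S p \<Longrightarrow> coeffs_in S q \<Longrightarrow> coeffs_in S (p + q)"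
  unfolding coeffs_in_def using is_subringD(3)[of S] by simp

lemma coeffs_in_diff: "is_subring S \<Longrightarrow> coeffs_in S p \<Longrightarrow> coeffs_in S q \<Longrightarrow> coeffs_in S (p - q)"
  unfolding coeffs_in_def using is_subringD(6)[of S] by simp

lemma coeffs_in_mult: "is_subring S \<Longrightarrow> coeffs_in S p \<Longrightarrow> coeffs_in S q \<Longrightarrow> coeffs_in S (p * q)"
  unfolding coeffs_in_def coeff_mult by (intro allI is_subring_sum) (auto intro: is_subringD(4))

lemma coeffs_in_smult: "is_subring S \<Longrightarrow> c \<in> S \<Longrightarrow> coeffs_in S p \<Longrightarrow> coeffs_in S (Polynomial.smult c p)"
  unfolding coeffs_in_def using is_subringD(4)[of S] by simp

lemma coeffs_in_monom: "is_subring S \<Longrightarrow> c \<in> S \<Longrightarrow> coeffs_in S (Polynomial.monom c n)"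
  unfolding coeffs_in_def using is_subringD(1)[of S] by (simp add: coeff_monom)

lemma coeffs_in_pCons: "c \<in> S \<Longrightarrow> coeffs_in S p \<Longrightarrow> coeffs_in S (pCons c p)"
  unfolding coeffs_in_def by (metis coeff_pCons_0 coeff_pCons_Suc not0_implies_Suc)

lemma coeffs_in_pCons_iff: "coeffs_in S (pCons c p) \<longleftrightarrow> c \<in> S \<and> coeffs_in S p"
  unfolding coeffs_in_def by (metis coeff_pCons_0 coeff_pCons_Suc not0_implies_Suc)

lemma coeffs_in_const: "is_subring S \<Longrightarrow> c \<in> S \<Longrightarrow> coeffs_in S [:c:]"
  by (intro coeffs_in_pCons) auto

lemma coeffs_in_pcompose:
  "is_subring S \<Longrightarrow> coeffs_in S p \<Longrightarrow> coeffs_in S q \<Longrightarrow> coeffs_in S (pcompose p q)"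
  by (induction p) (auto simp: pcompose_pCons coeffs_in_pCons_iff
      intro: coeffs_in_add coeffs_in_const coeffs_in_mult)

lemma coeffs_in_map_poly: "(\<And>x. f x \<in> S) \<Longrightarrow> f 0 = 0 \<Longrightarrow> coeffs_in S (map_poly f p)"
  unfolding coeffs_in_def by (simp add: coeff_map_poly)

text \<open>Each step of the long division subtracts an \<open>S\<close>-multiple of \<open>b\<close>.\<close>

lemma coeffs_in_mod:
  fixes a b :: "'a::field poly"
  assumes S: "is_subring S" and b: "b \<noteq> 0" "inverse (lead_coeff b) \<in> S" "coeffs_in S b"
  shows "coeffs_in S a \<Longrightarrow> coeffs_in S (a mod b)"
proof (induction "degree a" arbitrary: a rule: less_induct)
  case less
  show ?case
  proof (cases "degree a < degree b")
    case True
    then show ?thesis using less.prems by (simp add: mod_poly_less)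
  next
    case False
    define d where "d = degree a"
    define c where "c = lead_coeff a * inverse (lead_coeff b)"
    define m where "m = Polynomial.monom 1 (d - degree b) * b"
    define a' where "a' = a - Polynomial.smult c m"
    have cS: "c \<in> S" unfolding c_def using less.prems b S unfolding coeffs_in_def by (auto intro: is_subringD)
    have a': "coeffs_in S a'" unfolding a'_def m_def
      by (intro coeffs_in_diff coeffs_in_smult coeffs_in_mult coeffs_in_monom S cS less.prems b is_subringD(2))
    have degm: "degree m \<le> d"
      using degree_mult_le[of "Polynomial.monom (1::'a) (d - degree b)" b] False
      unfolding m_def d_def by (simp add: degree_monom_eq)
    have "Polynomial.coeff m d = lead_coeff b"
      using False unfolding m_def d_def by (simp add: coeff_monom_mult)
    then have "Polynomial.coeff a' d = 0" unfolding a'_def c_def d_def using b by simp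
    moreover have "degree a' \<le> d"
      unfolding a'_def d_def using degm d_def by (intro degree_diff_le) auto
    ultimately have "a' = 0 \<or> degree a' < d"
      by (metis le_neq_implies_less leading_coeff_0_iff)
    then have IH: "coeffs_in S (a' mod b)"
    proof
      assume "degree a' < d"
      then show ?thesis using less.hyps[of a'] a' d_def by blast
    qed (use S in simp)
    have "a = a' + Polynomial.smult c (Polynomial.monom 1 (d - degree b)) * b" unfolding a'_def m_def by (simp add: mult_smult_left)
    then have "a mod b = a' mod b" by (metis mod_mult_self1)
    then show ?thesis using IH by simp
  qed
qed

lemma coeffs_in_gcd:
  fixes a b :: "real poly"
  assumes F: "real_subfield F"
  shows "coeffs_in F a \<Longrightarrow> coeffs_in F b \<Longrightarrow> coeffs_in F (gcd a b)"
proof (induction "degree b" arbitrary: a b rule: less_induct)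
  case less
  have S: "is_subring F" using F by (rule is_subring_real_subfield)
  have normalize: "coeffs_in F (normalize p)" if "coeffs_in F p" for p :: "real poly"
  proof (cases "p = 0")
    case False
    have "normalize p = Polynomial.smult (inverse (lead_coeff p)) p"
      using False by (simp add: normalize_poly_eq_map_poly smult_conv_map_poly field_simps)
    moreover have "inverse (lead_coeff p) \<in> F"
      using real_subfieldD(6)[OF F] that unfolding coeffs_in_def by auto
    ultimately show ?thesis using coeffs_in_smult[OF S _ that] by simp
  qed (use S in simp)
  show ?case
  proof (cases "b = 0")
    case True then show ?thesis using normalize less.prems by simp
  next
    case False
    have mod: "coeffs_in F (a mod b)"
      using coeffs_in_mod[OF S False _ less.prems(2) less.prems(1)] real_subfieldD(6)[OF F] less.prems(2)
      unfolding coeffs_in_def by auto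
    have gcd: "gcd a b = gcd b (a mod b)" using False by (simp add: gcd.commute)
    show ?thesis
    proof (cases "a mod b = 0")
      case True then show ?thesis using gcd normalize less.prems by simp
    next
      case False
      then have "degree (a mod b) < degree b" using \<open>b \<noteq> 0\<close> degree_mod_less' by blast
      then show ?thesis using less.hyps less.prems mod gcd by metis
    qed
  qed
qed

text \<open>The gcd of \<open>P\<close> and \<open>H\<close> is \<open>X - x\<close>, and it has coefficients in \<open>F\<close>.\<close>

lemma unique_common_root_in_subfield:
  fixes P H :: "real poly"
  assumes F: "real_subfield F" and PF: "coeffs_in F P" and HF: "coeffs_in F H" and P0: "P \<noteq> 0"
    and Px: "poly P x = 0" and Hx: "poly H x = 0"
    and sqf: "rsquarefree (map_poly complex_of_real P)"
    and unique: "\<And>w. poly (map_poly complex_of_real P) w = 0 \<Longrightarrow>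
                       poly (map_poly complex_of_real H) w = 0 \<Longrightarrow> w = complex_of_real x"
  shows "x \<in> F"
proof -
  define G where "G = gcd P H"
  let ?c = "map_poly complex_of_real"
  have GF: "coeffs_in F G" unfolding G_def using F PF HF by (rule coeffs_in_gcd)
  have "[:-x, 1:] dvd G" unfolding G_def using Px Hx by (simp add: poly_eq_0_iff_dvd)
  then obtain G2 where G2: "G = [:-x, 1:] * G2" by (elim dvdE)
  have G20: "G2 \<noteq> 0" using P0 G2 unfolding G_def by auto
  have "degree G2 = 0"
  proof (rule ccontr)
    assume "degree G2 \<noteq> 0"
    then have "\<not> constant (poly (?c G2))" by (simp add: constant_degree)
    then obtain w where w: "poly (?c G2) w = 0"
      using fundamental_theorem_of_algebra by blast
    have GP: "?c G dvd ?c P" and GH: "?c G dvd ?c H"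
      unfolding G_def by (intro complex_of_real_poly.hom_dvd; simp)+
    have Gc: "?c G = [:- complex_of_real x, 1:] * ?c G2"
      unfolding G2 by (simp add: hom_distribs)
    have "poly (?c G) w = 0" using w Gc by simp
    then have "poly (?c P) w = 0" "poly (?c H) w = 0"
      using GP GH by (auto simp: poly_eq_0_iff_dvd dest: dvd_trans)
    then have "w = complex_of_real x" using unique by auto
    then have "[:- complex_of_real x, 1:] dvd ?c G2"
      using w poly_eq_0_iff_dvd by blast
    then have "[:- complex_of_real x, 1:] ^ 2 dvd ?c G"
      unfolding Gc power2_eq_square by (metis mult_dvd_mono dvd_refl)
    then have "[:- complex_of_real x, 1:] ^ 2 dvd ?c P"
      using GP by (rule dvd_trans)
    then have "2 \<le> Polynomial.order (complex_of_real x) (?c P)"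
      using P0 by (intro order_max) auto
    then show False using sqf unfolding rsquarefree_def by (metis not_numeral_le_zero one_less_numeral_iff semiring_norm(76) verit_comp_simplify1(3))
  qed
  then obtain c where c: "G2 = [:c:]" by (metis degree_eq_zeroE)
  have "lead_coeff G = 1" using poly_gcd_monic[of P H] P0 unfolding G_def by auto
  moreover have "lead_coeff G = c" unfolding G2 c using G20 c by simp
  ultimately have "G = [:-x, 1:]" using G2 c by simp
  then have "- x \<in> F" using GF unfolding coeffs_in_def by (metis coeff_pCons_0)
  then show ?thesis using real_subfieldD(5)[OF F, of "-x"] by simp
qed

lemma irreducible_rat_poly_dvd:
  fixes P g :: "rat poly" and z :: complex
  assumes irr: "irreducible P"
    and Pz: "poly (map_poly of_rat P) z = 0" and gz: "poly (map_poly of_rat g) z = 0"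
  shows "P dvd g"
proof (rule ccontr)
  assume "\<not> P dvd g"
  then have "gcd P g = 1"
    using prime_elem_imp_coprime[OF field_poly_irreducible_imp_prime[OF irr]] by simp
  then obtain u v where "u * P + v * g = 1"
    using bezout_coefficients_fst_snd[of P g] by metis
  then have "poly (map_poly of_rat (u * P + v * g)) z = 1"
    by simp
  then show False using Pz gz by (simp add: hom_distribs)
qed

interpretation complex_of_rat_field_hom: field_hom_0' "of_rat :: rat \<Rightarrow> complex" ..

lemma irreducible_rat_poly_rsquarefree:
  fixes P :: "rat poly"
  assumes "irreducible P"
  shows "rsquarefree (map_poly (of_rat :: rat \<Rightarrow> complex) P)"
proof -
  have "square_free P" using assms by (intro irreducible\<^sub>d_square_free) simp
  then show ?thesis by (intro square_free_rsquarefree) (simp add: complex_of_rat_field_hom.square_free_map_poly)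
qed

lemma degree_monic_irreducible_pos:
  fixes p :: "int poly"
  assumes "irreducible p" and "lead_coeff p = 1"
  shows "degree p > 0"
proof (rule ccontr)
  assume "\<not> degree p > 0"
  then have "p = 1" using assms(2) by (metis leading_coeff_0_iff one_neq_zero degree_0_id one_pCons neq0_conv)
  then show False using assms(1) by simp
qed

lemma irreducible_of_int_poly:
  fixes p :: "int poly"
  assumes irr: "irreducible p" and mon: "lead_coeff p = 1"
  shows "irreducible (of_int_poly p :: rat poly)"
proof -
  have deg: "degree p \<noteq> 0" using degree_monic_irreducible_pos[OF irr mon] by simp
  have "irreducible\<^sub>d p"
    using irreducible_primitive_connect[OF irreducible_imp_primitive[OF irr deg]] irr by simp
  then have "irreducible\<^sub>d (of_int_poly p :: rat poly)" by (rule irreducible\<^sub>d_int_rat)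
  then show ?thesis by simp
qed

lemma of_rat_of_int_poly: "map_poly of_rat (of_int_poly p :: rat poly) = of_int_poly p"
  by (subst map_poly_map_poly) (auto simp: o_def)

lemma map_poly_complex_of_real_of_int: "map_poly complex_of_real (of_int_poly p) = of_int_poly p"
  by (subst map_poly_map_poly) (auto simp: o_def)

lemma complex_of_real_of_rat: "complex_of_real (of_rat r) = of_rat r"
  by (cases r) (simp add: Fract_of_int_quotient of_rat_divide)

lemma map_poly_complex_of_real_of_rat:
  "map_poly complex_of_real (map_poly real_of_rat P) = map_poly of_rat P"
  by (subst map_poly_map_poly) (auto simp: o_def complex_of_real_of_rat)

lemma ipoly_complex_of_real: "ipoly p (complex_of_real x) = complex_of_real (ipoly p x)"
  unfolding map_poly_complex_of_real_of_int[symmetric] by (rule of_real_hom.poly_map_poly)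

lemma poly_of_rat_complex_of_real:
  "poly (map_poly of_rat P) (complex_of_real x) = complex_of_real (poly (map_poly of_rat P) x)"
  unfolding map_poly_complex_of_real_of_rat[symmetric] by (rule of_real_hom.poly_map_poly)

lemma rsquarefree_irreducible_int_poly:
  fixes p :: "int poly"
  assumes "irreducible p" and "lead_coeff p = 1"
  shows "rsquarefree (of_int_poly p :: complex poly)"
  using irreducible_rat_poly_rsquarefree[OF irreducible_of_int_poly[OF assms]]
  by (simp add: of_rat_of_int_poly)

lemma card_roots_irreducible_int_poly:
  fixes p :: "int poly"
  assumes "irreducible p" and "lead_coeff p = 1"
  shows "card {z :: complex. ipoly p z = 0} = degree p"
proof -
  have "of_int_poly p \<noteq> (0 :: complex poly)" using assms(2) by auto
  then show ?thesis
    using rsquarefree_card_degree rsquarefree_irreducible_int_poly[OF assms] by simp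
qed

text \<open>Over \<open>\<rat>\<close>, \<open>p\<close> divides \<open>g\<close>.\<close>

lemma ipoly_root_conjugate:
  fixes p g :: "int poly" and z w :: complex
  assumes irr: "irreducible p" and mon: "lead_coeff p = 1"
    and pz: "ipoly p z = 0" and gz: "ipoly g z = 0" and pw: "ipoly p w = 0"
  shows "ipoly g w = 0"
proof -
  have "of_int_poly p dvd (of_int_poly g :: rat poly)"
    using irreducible_rat_poly_dvd[OF irreducible_of_int_poly[OF irr mon], of z] pz gz
    by (simp add: of_rat_of_int_poly)
  then have "map_poly of_rat (of_int_poly p :: rat poly) dvd (map_poly of_rat (of_int_poly g :: rat poly) :: complex poly)"
    by (rule complex_of_rat_poly.hom_dvd)
  then have "of_int_poly p dvd (of_int_poly g :: complex poly)"
    by (simp only: of_rat_of_int_poly)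
  then show ?thesis using pw by (auto simp: poly_eq_0_iff_dvd dest: dvd_trans)
qed

lemma ipoly_eq_0_of_degree_less:
  fixes p f :: "int poly" and z :: complex
  assumes irr: "irreducible p" and mon: "lead_coeff p = 1" and deg: "degree f < degree p"
    and pz: "ipoly p z = 0" and fz: "ipoly f z = 0"
  shows "f = 0"
proof (rule ccontr)
  assume "f \<noteq> 0"
  then have fc: "of_int_poly f \<noteq> (0 :: complex poly)" by simp
  have "{w :: complex. ipoly p w = 0} \<subseteq> {w. ipoly f w = 0}"
    using ipoly_root_conjugate[OF irr mon pz fz] by blast
  then have "card {w :: complex. ipoly p w = 0} \<le> card {w :: complex. ipoly f w = 0}"
    using fc by (intro card_mono poly_roots_finite)
  also have "\<dots> \<le> degree f" using card_poly_roots_bound[OF fc] by simp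
  finally show False using card_roots_irreducible_int_poly[OF irr mon] deg by simp
qed

lemma ipoly_0_neq_0:
  fixes p :: "int poly"
  assumes irr: "irreducible p" and mon: "lead_coeff p = 1"
    and px: "ipoly p x = 0" and x: "x \<noteq> (0 :: complex)"
  shows "ipoly p 0 \<noteq> (0 :: complex)"
proof
  assume "ipoly p 0 = (0 :: complex)"
  moreover have "ipoly [:0, 1:] (0 :: complex) = 0" by simp
  ultimately have "ipoly [:0, 1:] x = 0" by (rule ipoly_root_conjugate[OF irr mon _ _ px])
  then show False using x by simp
qed

lemma monic_irreducible_factor:
  fixes q :: "int poly" and z :: complex
  assumes mon: "lead_coeff q = 1" and z: "ipoly q z = 0"
  obtains r where "irreducible r" "lead_coeff r = 1" "r dvd q" "ipoly r z = 0"
proof -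
  have q0: "q \<noteq> 0" using mon by auto
  have "normalize (prod_mset (prime_factorization q)) = q"
    using prod_mset_prime_factorization_weak[OF q0] mon by (simp add: normalize_poly_def)
  then have "q dvd prod_mset (prime_factorization q)" by (metis normalize_dvd_iff dvd_refl)
  then have "of_int_poly q dvd (of_int_poly (prod_mset (prime_factorization q)) :: complex poly)"
    by (rule of_int_poly_hom.hom_dvd)
  then have "ipoly (prod_mset (prime_factorization q)) z = 0"
    using z by (metis dvd_trans poly_eq_0_iff_dvd)
  moreover have "ipoly (prod_mset M) z = 0 \<Longrightarrow> \<exists>r\<in>#M. ipoly r z = 0" for M
    by (induction M) (auto simp: of_int_poly_hom.hom_mult)
  ultimately obtain r where r: "r \<in># prime_factorization q" and rz: "ipoly r z = 0"
    by blast
  have prime: "prime r" using r by (rule in_prime_factors_imp_prime)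
  have rq: "r dvd q" using r by (rule in_prime_factors_imp_dvd)
  have "normalize r = r" "r \<noteq> 0" using prime by (auto simp: prime_def)
  then have "unit_factor r = 1" by (metis mult_cancel_right2 unit_factor_mult_normalize)
  then have "lead_coeff r > 0" by (simp add: unit_factor_poly_def sgn_1_pos)
  moreover obtain s where "q = r * s" using rq by (elim dvdE)
  then have "lead_coeff r * lead_coeff s = 1" using mon by (simp add: lead_coeff_mult)
  ultimately have "lead_coeff r = 1" by (simp add: pos_zmult_eq_1_iff)
  then show ?thesis
    using that prime rq rz by (metis prime_elem_imp_irreducible prime_imp_prime_elem)
qed

lemma irreducible_rat_factor:
  fixes P :: "rat poly" and z :: complex
  assumes P0: "P \<noteq> 0" and z: "poly (map_poly of_rat P) z = 0"
  obtains Q where "irreducible Q" "poly (map_poly of_rat Q) z = 0"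
proof -
  have "P dvd prod_mset (prime_factorization P)"
    using prod_mset_prime_factorization_weak[OF P0] by (metis normalize_dvd_iff dvd_normalize_iff dvd_refl)
  then have "map_poly of_rat P dvd (map_poly of_rat (prod_mset (prime_factorization P)) :: complex poly)"
    by (rule complex_of_rat_poly.hom_dvd)
  then have "poly (map_poly of_rat (prod_mset (prime_factorization P))) z = 0"
    using z by (metis dvd_trans poly_eq_0_iff_dvd)
  moreover have "poly (map_poly of_rat (prod_mset M)) z = 0 \<Longrightarrow>
      \<exists>Q\<in>#M. poly (map_poly of_rat Q) z = 0" for M
    by (induction M) (auto simp: hom_distribs)
  ultimately obtain Q where "Q \<in># prime_factorization P" "poly (map_poly of_rat Q) z = 0"
    by blast
  then show ?thesis
    using that by (metis in_prime_factors_imp_prime prime_elem_imp_irreducible prime_imp_prime_elem)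
qed

section \<open>The values of an integer polynomial at the conjugates of an algebraic integer\<close>

lemma poly_eq_sum_lessThan:
  fixes g :: "'a::comm_semiring_1 poly"
  assumes "degree g < n"
  shows "poly g z = (\<Sum>j<n. Polynomial.coeff g j * z ^ j)"
proof -
  have "poly g z = (\<Sum>j\<le>degree g. Polynomial.coeff g j * z ^ j)" by (simp add: poly_altdef)
  also have "\<dots> = (\<Sum>j<n. Polynomial.coeff g j * z ^ j)"
    using assms by (intro sum.mono_neutral_left) (auto simp: coeff_eq_0)
  finally show ?thesis .
qed

text \<open>The integer matrix of multiplication by \<open>f\<close> on \<open>\<int>[X]/(p)\<close> in the basis \<open>1, X, \<dots>, X\<^sup>n\<^sup>-\<^sup>1\<close>;
  its columns are the coefficients of \<open>X\<^sup>k f mod p\<close>, integral because \<open>p\<close> is monic.\<close>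

lemma multiplication_matrix_exists:
  fixes p f :: "int poly"
  assumes mon: "lead_coeff p = 1" and n: "degree p = n" "n > 0"
  obtains M :: "int mat" where "M \<in> carrier_mat n n"
    "\<And>z k. ipoly p z = 0 \<Longrightarrow> k < n \<Longrightarrow>
       (\<Sum>j<n. of_int (M $$ (j, k)) * z ^ j) = ipoly f z * (z :: complex) ^ k"
proof -
  define P :: "rat poly" where "P = of_int_poly p"
  have P0: "P \<noteq> 0" and degP: "degree P = n"
    using mon n unfolding P_def by auto
  define r where "r k = of_int_poly (f * Polynomial.monom 1 k) mod P" for k
  have r_Ints: "Polynomial.coeff (r k) j \<in> \<int>" for k j
  proof -
    have "coeffs_in \<int> (r k)" unfolding r_def
      by (rule coeffs_in_mod[OF is_subring_Ints P0]) (use mon in \<open>auto simp: coeffs_in_def P_def\<close>)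
    then show ?thesis unfolding coeffs_in_def by auto
  qed
  have deg_r: "degree (r k) < n" for k
    using degree_mod_less'[OF P0, of "of_int_poly (f * Polynomial.monom 1 k)"] degP n(2)
    by (cases "r k = 0") (auto simp: r_def)
  define M :: "int mat" where "M = mat n n (\<lambda>(j, k). \<lfloor>Polynomial.coeff (r k) j\<rfloor>)"
  have M_entry: "(of_int (M $$ (j, k)) :: complex) = of_rat (Polynomial.coeff (r k) j)"
    if "j < n" "k < n" for j k
    using that r_Ints[of k j] unfolding M_def by (auto elim!: Ints_cases)
  show ?thesis
  proof (rule that)
    show "M \<in> carrier_mat n n" unfolding M_def by simp
    fix z :: complex and k assume z: "ipoly p z = 0" and k: "k < n"
    have "(\<Sum>j<n. of_int (M $$ (j, k)) * z ^ j) =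
        (\<Sum>j<n. Polynomial.coeff (map_poly of_rat (r k)) j * z ^ j)"
      using k by (intro sum.cong) (auto simp: M_entry)
    also have "\<dots> = poly (map_poly of_rat (r k)) z"
      using deg_r[of k] by (intro poly_eq_sum_lessThan[symmetric]) simp
    also have "r k = of_int_poly (f * Polynomial.monom 1 k) - (of_int_poly (f * Polynomial.monom 1 k) div P) * P"
      unfolding r_def by (simp add: minus_div_mult_eq_mod)
    also have "poly (map_poly of_rat \<dots>) z = ipoly f z * z ^ k"
      using z by (simp add: hom_distribs of_rat_of_int_poly P_def poly_monom)
    finally show "(\<Sum>j<n. of_int (M $$ (j, k)) * z ^ j) = ipoly f z * z ^ k" .
  qed
qed

text \<open>The row vector \<open>(1, z, \<dots>, z\<^sup>n\<^sup>-\<^sup>1)\<close> is a left eigenvector.\<close>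

lemma char_poly_root_of_power_vector:
  fixes A :: "complex mat"
  assumes A: "A \<in> carrier_mat n n" and n: "n > 0"
    and eq: "\<And>k. k < n \<Longrightarrow> (\<Sum>j<n. A $$ (j, k) * z ^ j) = c * z ^ k"
  shows "poly (char_poly A) c = 0"
proof -
  define u where "u = vec n (\<lambda>j. z ^ j)"
  have "eigenvector (transpose_mat A) u c"
    unfolding eigenvector_def
  proof (intro conjI)
    show "u \<in> carrier_vec (dim_row (transpose_mat A))" using A unfolding u_def by simp
    have "u $ 0 \<noteq> 0" using n unfolding u_def by simp
    then show "u \<noteq> 0\<^sub>v (dim_row (transpose_mat A))" using A n by auto
    show "transpose_mat A *\<^sub>v u = c \<cdot>\<^sub>v u"
    proof (rule eq_vecI)
      fix k assume "k < dim_vec (c \<cdot>\<^sub>v u)"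
      then have k: "k < n" unfolding u_def by simp
      have "(transpose_mat A *\<^sub>v u) $ k = (\<Sum>j<n. A $$ (j, k) * z ^ j)"
        using A k unfolding u_def by (simp add: scalar_prod_def lessThan_atLeast0 row_def)
      then show "(transpose_mat A *\<^sub>v u) $ k = (c \<cdot>\<^sub>v u) $ k" using eq[OF k] k unfolding u_def by simp
    qed (use A in \<open>simp add: u_def\<close>)
  qed
  then have "eigenvalue (transpose_mat A) c" unfolding eigenvalue_def by blast
  then have "poly (char_poly (transpose_mat A)) c = 0"
    using eigenvalue_root_char_poly[of "transpose_mat A" n] A by simp
  then show ?thesis using char_poly_transpose_mat[OF A] by simp
qed

text \<open>An eigenvector \<open>v\<close> for an eigenvalue other than the \<open>g z\<close> would give a nonzero polynomial
  \<open>\<Sum> v\<^sub>k X\<^sup>k\<close> of degree \<open>< n\<close> vanishing at the \<open>n\<close> points of \<open>Z\<close>.\<close>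

lemma eigenvalue_of_power_vectors:
  fixes A :: "complex mat" and Z :: "complex set"
  assumes A: "A \<in> carrier_mat n n" and n: "n > 0" and Z: "finite Z" "card Z = n"
    and eq: "\<And>z k. z \<in> Z \<Longrightarrow> k < n \<Longrightarrow> (\<Sum>j<n. A $$ (j, k) * z ^ j) = g z * z ^ k"
    and w: "eigenvalue A w"
  shows "\<exists>z\<in>Z. w = g z"
proof (rule ccontr)
  assume not_value: "\<not> (\<exists>z\<in>Z. w = g z)"
  obtain v where v: "v \<in> carrier_vec n" "v \<noteq> 0\<^sub>v n" "A *\<^sub>v v = w \<cdot>\<^sub>v v"
    using w A unfolding eigenvalue_def eigenvector_def by auto
  define W where "W = (\<Sum>k<n. Polynomial.monom (v $ k) k)"
  have W_coeff: "Polynomial.coeff W k = (if k < n then v $ k else 0)" for k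
    unfolding W_def by (simp add: coeff_sum coeff_monom)
  have W_root: "poly W z = 0" if z: "z \<in> Z" for z
  proof -
    have "w * poly W z = (\<Sum>j<n. z ^ j * (A *\<^sub>v v) $ j)"
      using v unfolding W_def by (simp add: poly_sum poly_monom sum_distrib_left mult_ac)
    also have "\<dots> = (\<Sum>j<n. \<Sum>k<n. v $ k * (A $$ (j, k) * z ^ j))"
      using A v(1) by (intro sum.cong) (auto simp: scalar_prod_def lessThan_atLeast0 row_def
          sum_distrib_left mult_ac)
    also have "\<dots> = (\<Sum>k<n. v $ k * (\<Sum>j<n. A $$ (j, k) * z ^ j))"
      by (subst sum.swap) (simp add: sum_distrib_left)
    also have "\<dots> = g z * poly W z"
      using eq[OF z] unfolding W_def by (simp add: poly_sum poly_monom sum_distrib_left mult_ac)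
    finally have "w * poly W z = g z * poly W z" .
    moreover have "w \<noteq> g z" using not_value z by auto
    ultimately show ?thesis by simp
  qed
  have "W = 0"
  proof (rule ccontr)
    assume W0: "W \<noteq> 0"
    have "degree W \<le> n - 1" by (rule degree_le) (auto simp: W_coeff)
    then have "degree W < n" using n by simp
    moreover have "Z \<subseteq> {z. poly W z = 0}" using W_root by blast
    then have "n \<le> card {z. poly W z = 0}"
      unfolding Z(2)[symmetric] by (intro card_mono poly_roots_finite W0)
    moreover have "card {z. poly W z = 0} \<le> degree W" using W0 by (rule card_poly_roots_bound)
    ultimately show False by simp
  qed
  then have "v = 0\<^sub>v n" using v(1) W_coeff by (intro eq_vecI) (auto, metis)
  then show False using v(2) by simp
qed

lemma conjugate_values_poly:
  fixes p f :: "int poly"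
  assumes irr: "irreducible p" and mon: "lead_coeff p = 1"
  obtains q :: "int poly" where "lead_coeff q = 1"
    "\<And>z :: complex. ipoly p z = 0 \<Longrightarrow> ipoly q (ipoly f z) = 0"
    "\<And>w :: complex. ipoly q w = 0 \<Longrightarrow> \<exists>z. ipoly p z = 0 \<and> w = ipoly f z"
proof -
  define n where "n = degree p"
  have n: "n > 0" unfolding n_def by (rule degree_monic_irreducible_pos[OF irr mon])
  obtain M where M: "M \<in> carrier_mat n n" and
    eq: "\<And>z k. ipoly p z = 0 \<Longrightarrow> k < n \<Longrightarrow>
       (\<Sum>j<n. of_int (M $$ (j, k)) * z ^ j) = ipoly f z * (z :: complex) ^ k"
    using multiplication_matrix_exists[OF mon n_def[symmetric] n] by blast
  define A :: "complex mat" where "A = map_mat of_int M"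
  have A: "A \<in> carrier_mat n n" using M unfolding A_def by simp
  have A_eq: "(\<Sum>j<n. A $$ (j, k) * z ^ j) = ipoly f z * z ^ k" if "ipoly p z = 0" "k < n" for z k
  proof -
    have "(\<Sum>j<n. A $$ (j, k) * z ^ j) = (\<Sum>j<n. of_int (M $$ (j, k)) * z ^ j)"
      using M that(2) unfolding A_def by (intro sum.cong) auto
    then show ?thesis using eq[OF that] by simp
  qed
  have char: "of_int_poly (char_poly M) = char_poly A"
    unfolding A_def by (rule of_int_hom.char_poly_hom[OF M, symmetric])
  show ?thesis
  proof (rule that[of "char_poly M"])
    show "lead_coeff (char_poly M) = 1" using degree_monic_char_poly[OF M] by simp
    show "ipoly (char_poly M) (ipoly f z) = 0" if "ipoly p z = 0" for z :: complex
      using char_poly_root_of_power_vector[OF A n A_eq[OF that]] char by simp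
    show "\<exists>z. ipoly p z = 0 \<and> w = ipoly f z" if "ipoly (char_poly M) w = 0" for w :: complex
    proof -
      have "eigenvalue A w" using eigenvalue_root_char_poly[OF A] that char by simp
      moreover have "card {z :: complex. ipoly p z = 0} = n"
        unfolding n_def by (rule card_roots_irreducible_int_poly[OF irr mon])
      moreover have "finite {z :: complex. ipoly p z = 0}"
        using mon by (intro poly_roots_finite) auto
      ultimately show ?thesis using eigenvalue_of_power_vectors[OF A n _ _ A_eq] by blast
    qed
  qed
qed

text \<open>The witness is the characteristic polynomial of \<open>C\<close>.\<close>

lemma root_of_rat_matrix_eigenvector:
  fixes C :: "nat \<Rightarrow> nat \<Rightarrow> rat" and b :: "nat \<Rightarrow> real"
  assumes j0: "j0 < N" "b j0 \<noteq> 0"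
    and eq: "\<And>i. i < N \<Longrightarrow> x * b i = (\<Sum>j<N. of_rat (C i j) * b j)"
  shows "\<exists>P :: rat poly. lead_coeff P = 1 \<and> degree P = N \<and> poly (map_poly of_rat P) x = 0"
proof -
  define A :: "rat mat" where "A = mat N N (\<lambda>(i, j). C i j)"
  have A: "A \<in> carrier_mat N N" unfolding A_def by simp
  define Ar :: "real mat" where "Ar = map_mat of_rat A"
  have Ar: "Ar \<in> carrier_mat N N" unfolding Ar_def A_def by simp
  define v where "v = vec N b"
  have "eigenvector Ar v x" unfolding eigenvector_def
  proof (intro conjI)
    show "v \<in> carrier_vec (dim_row Ar)" using Ar unfolding v_def by simp
    have "v $ j0 \<noteq> 0" using j0 unfolding v_def by simp
    then show "v \<noteq> 0\<^sub>v (dim_row Ar)" using Ar j0 by auto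
    show "Ar *\<^sub>v v = x \<cdot>\<^sub>v v"
    proof (rule eq_vecI)
      fix i assume "i < dim_vec (x \<cdot>\<^sub>v v)"
      then have i: "i < N" unfolding v_def by simp
      have "(Ar *\<^sub>v v) $ i = (\<Sum>j<N. of_rat (C i j) * b j)"
        using Ar i unfolding v_def Ar_def A_def by (simp add: scalar_prod_def lessThan_atLeast0 row_def)
      then show "(Ar *\<^sub>v v) $ i = (x \<cdot>\<^sub>v v) $ i" using eq[OF i] i unfolding v_def by simp
    qed (use Ar in \<open>simp add: v_def\<close>)
  qed
  then have "poly (char_poly Ar) x = 0"
    using eigenvalue_root_char_poly[OF Ar] unfolding eigenvalue_def by blast
  moreover have "char_poly Ar = map_poly of_rat (char_poly A)"
    unfolding Ar_def by (rule of_rat_hom.char_poly_hom[OF A])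
  moreover have "degree (char_poly A) = N \<and> lead_coeff (char_poly A) = 1"
    using degree_monic_char_poly[OF A] by simp
  ultimately show ?thesis by auto
qed

text \<open>Multiplication by \<open>x\<close> maps each element of the finite spanning set \<open>B\<close> into the
  \<open>\<rat>\<close>-span of \<open>B\<close>, so \<open>x\<close> is an eigenvalue of a rational matrix of size \<open>card B\<close>.\<close>

lemma real_number_field_degree_bound:
  assumes K: "real_number_field K"
  obtains N where "\<And>x. x \<in> K \<Longrightarrow>
    \<exists>P :: rat poly. lead_coeff P = 1 \<and> degree P = N \<and> poly (map_poly of_rat P) x = 0"
proof -
  obtain B where B: "finite B" "B \<subseteq> K"
    and span: "\<And>x. x \<in> K \<Longrightarrow> \<exists>c :: real \<Rightarrow> rat. x = (\<Sum>b\<in>B. of_rat (c b) * b)"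
    using K unfolding real_number_field_def by blast
  have F: "real_subfield K" using K by (rule real_number_field_subfield)
  obtain bs where bs: "set bs = B" "distinct bs" using finite_distinct_list[OF B(1)] by blast
  define N where "N = length bs"
  have sumB: "(\<Sum>b\<in>B. f b) = (\<Sum>j<N. f (bs ! j))" for f :: "real \<Rightarrow> real"
    using sum.reindex_bij_betw[OF bij_betw_nth[OF bs(2) refl bs(1)[symmetric]], of f] unfolding N_def by auto
  have "\<exists>b\<in>B. b \<noteq> 0"
  proof (rule ccontr)
    assume "\<not> (\<exists>b\<in>B. b \<noteq> 0)"
    then have "(\<Sum>b\<in>B. of_rat (c b) * b) = 0" for c :: "real \<Rightarrow> rat" by (intro sum.neutral) auto
    then show False using span[OF real_subfieldD(2)[OF F]] by auto
  qed
  then obtain j0 where j0: "j0 < N" "bs ! j0 \<noteq> 0" using bs unfolding N_def by (metis in_set_conv_nth)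
  show ?thesis
  proof (rule that)
    fix x assume x: "x \<in> K"
    have "\<exists>c :: real \<Rightarrow> rat. x * bs ! i = (\<Sum>b\<in>B. of_rat (c b) * b)" if "i < N" for i
    proof -
      have "bs ! i \<in> K" using that bs B unfolding N_def by (metis nth_mem subsetD)
      then show ?thesis using span real_subfieldD(4)[OF F x] by blast
    qed
    then obtain C where C: "\<And>i. i < N \<Longrightarrow> x * bs ! i = (\<Sum>b\<in>B. of_rat (C i b) * b)" by metis
    show "\<exists>P :: rat poly. lead_coeff P = 1 \<and> degree P = N \<and> poly (map_poly of_rat P) x = 0"
      by (rule root_of_rat_matrix_eigenvector[of j0 N "(!) bs" x "\<lambda>i j. C i (bs ! j)"])
        (use j0 C sumB in auto)
  qed
qed

lemma real_number_field_algebraic: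
  assumes "real_number_field K" "x \<in> K"
  obtains P :: "rat poly" where "lead_coeff P = 1" "poly (map_poly of_rat P) x = 0"
proof -
  obtain N where "\<And>x. x \<in> K \<Longrightarrow>
      \<exists>P :: rat poly. lead_coeff P = 1 \<and> degree P = N \<and> poly (map_poly of_rat P) x = 0"
    using real_number_field_degree_bound[OF assms(1)] by blast
  then show ?thesis using that assms(2) by blast
qed

section \<open>The primitive element theorem\<close>

lemma finite_nat_collisions:
  fixes A B :: "complex set"
  assumes "finite A" "finite B"
  shows "finite {t :: nat. \<exists>a'\<in>A. \<exists>b'\<in>B. b' \<noteq> b \<and> a' + of_nat t * b' = a + of_nat t * b}"
proof -
  let ?U = "\<Union>(a', b')\<in>A \<times> (B - {b}). {t :: nat. of_nat t = (a' - a) / (b - b')}"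
  have "{t :: nat. \<exists>a'\<in>A. \<exists>b'\<in>B. b' \<noteq> b \<and> a' + of_nat t * b' = a + of_nat t * b} \<subseteq> ?U"
    by (auto simp: field_simps)
  moreover have "finite {t :: nat. (of_nat t :: complex) = c}" for c
  proof (cases "\<exists>t0. (of_nat t0 :: complex) = c")
    case True
    then obtain t0 where "(of_nat t0 :: complex) = c" by blast
    then have "{t :: nat. (of_nat t :: complex) = c} \<subseteq> {t0}" by (auto simp: of_nat_eq_iff)
    then show ?thesis by (rule finite_subset) simp
  qed simp
  then have "finite ?U" using assms by (intro finite_UN_I) auto
  ultimately show ?thesis by (rule finite_subset)
qed

lemma gen_field_contains_root_of_no_collision:
  fixes a b :: real and Pa Q :: "rat poly" and t :: nat
  assumes Pa: "poly (map_poly of_rat Pa) a = 0"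
    and Q: "irreducible Q" "poly (map_poly of_rat Q) b = 0"
    and no_collision: "\<And>a' b'. poly (map_poly of_rat Pa) a' = 0 \<Longrightarrow> poly (map_poly of_rat Q) b' = 0 \<Longrightarrow>
      a' + of_nat t * b' = complex_of_real (a + of_nat t * b) \<Longrightarrow> b' = complex_of_real b"
  shows "b \<in> gen_field (a + of_nat t * b)"
proof -
  define c where "c = a + of_nat t * b"
  define F where "F = gen_field c"
  have F: "real_subfield F" unfolding F_def by (rule real_subfield_gen_field)
  have cF: "c \<in> F" unfolding F_def by (rule gen_field_self)
  have rat_coeffs: "coeffs_in F (map_poly real_of_rat P)" for P
    using real_subfield_of_rat[OF F] by (intro coeffs_in_map_poly) auto
  have "b \<in> F"
  proof (rule unique_common_root_in_subfield[OF F])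
    let ?H = "pcompose (map_poly real_of_rat Pa) [:c, - of_nat t:]"
    show "coeffs_in F (map_poly real_of_rat Q)" by (rule rat_coeffs)
    show "coeffs_in F ?H"
      by (intro coeffs_in_pcompose is_subring_real_subfield[OF F] rat_coeffs coeffs_in_pCons cF coeffs_in_0)
        (use real_subfieldD(5)[OF F real_subfield_of_nat[OF F]] in auto)
    show "map_poly real_of_rat Q \<noteq> 0" using Q(1) by auto
    show "poly (map_poly real_of_rat Q) b = 0" by (rule Q(2))
    show "poly ?H b = 0" using Pa by (simp add: poly_pcompose c_def)
    show "rsquarefree (map_poly complex_of_real (map_poly real_of_rat Q))"
      using irreducible_rat_poly_rsquarefree[OF Q(1)] by (simp add: map_poly_complex_of_real_of_rat)
    fix w assume w1: "poly (map_poly complex_of_real (map_poly real_of_rat Q)) w = 0"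
      and w2: "poly (map_poly complex_of_real ?H) w = 0"
    have "map_poly complex_of_real ?H =
        pcompose (map_poly complex_of_real (map_poly real_of_rat Pa)) [:complex_of_real c, - of_nat t:]"
      by (simp add: hom_distribs)
    then have "poly (map_poly of_rat Pa) (complex_of_real c - of_nat t * w) = 0"
      using w2 by (simp add: poly_pcompose map_poly_complex_of_real_of_rat algebra_simps)
    moreover have "poly (map_poly of_rat Q) w = 0" using w1 by (simp add: map_poly_complex_of_real_of_rat)
    ultimately show "w = complex_of_real b" using no_collision unfolding c_def by fastforce
  qed
  then show ?thesis unfolding F_def c_def .
qed

text \<open>For all but finitely many \<open>t\<close>, \<open>b\<close> is the only common root of its irreducible
  polynomial \<open>Q\<close> and of \<open>Pa (a + t b - t X)\<close>, so \<open>b\<close>, and with it \<open>a\<close>, lies in \<open>\<rat>(a + t b)\<close>.\<close>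

lemma primitive_element_step:
  fixes a b :: real and Pa Pb :: "rat poly"
  assumes Pa: "Pa \<noteq> 0" "poly (map_poly of_rat Pa) a = 0"
    and Pb: "Pb \<noteq> 0" "poly (map_poly of_rat Pb) b = 0"
  obtains t :: nat where "a \<in> gen_field (a + of_nat t * b)" "b \<in> gen_field (a + of_nat t * b)"
proof -
  obtain Q where Q: "irreducible Q" "poly (map_poly of_rat Q) (complex_of_real b) = 0"
    using irreducible_rat_factor[OF Pb(1), of "complex_of_real b"] Pb(2)
    by (auto simp: poly_of_rat_complex_of_real)
  define Ra where "Ra = {w :: complex. poly (map_poly of_rat Pa) w = 0}"
  define Rb where "Rb = {w :: complex. poly (map_poly of_rat Q) w = 0}"
  have "finite Ra" unfolding Ra_def using Pa(1) by (intro poly_roots_finite) auto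
  moreover have "finite Rb" unfolding Rb_def using Q(1) by (intro poly_roots_finite) auto
  ultimately obtain t :: nat where t: "\<not> (\<exists>a'\<in>Ra. \<exists>b'\<in>Rb. b' \<noteq> complex_of_real b \<and>
      a' + of_nat t * b' = complex_of_real a + of_nat t * complex_of_real b)"
    using ex_new_if_finite[OF infinite_UNIV_nat finite_nat_collisions] by blast
  have b: "b \<in> gen_field (a + of_nat t * b)"
    by (rule gen_field_contains_root_of_no_collision[OF Pa(2) Q(1)])
      (use Q(2) t in \<open>auto simp: poly_of_rat_complex_of_real Ra_def Rb_def\<close>)
  let ?F = "gen_field (a + of_nat t * b)"
  have "a + of_nat t * b - of_nat t * b \<in> ?F"
    by (intro real_subfield_diff real_subfieldD(4) real_subfield_of_nat real_subfield_gen_field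
        gen_field_self b)
  then show ?thesis using that b by simp
qed

lemma primitive_element:
  assumes K: "real_number_field K"
  obtains \<gamma> where "\<gamma> \<in> K" "gen_field \<gamma> = K"
proof -
  have F: "real_subfield K" using K by (rule real_number_field_subfield)
  obtain B where B: "finite B" "B \<subseteq> K"
    and span: "\<And>x. x \<in> K \<Longrightarrow> \<exists>c :: real \<Rightarrow> rat. x = (\<Sum>b\<in>B. of_rat (c b) * b)"
    using K unfolding real_number_field_def by blast
  have alg: "\<exists>P :: rat poly. P \<noteq> 0 \<and> poly (map_poly of_rat P) x = 0" if "x \<in> K" for x
    using real_number_field_algebraic[OF K that] by (metis leading_coeff_0_iff zero_neq_one)
  have "\<exists>\<gamma>\<in>K. B' \<subseteq> gen_field \<gamma>" if "finite B'" "B' \<subseteq> K" for B'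
    using that
  proof (induction B' rule: finite_induct)
    case empty then show ?case using real_subfieldD(1)[OF F] by blast
  next
    case (insert b B')
    then obtain \<gamma> where \<gamma>: "\<gamma> \<in> K" "B' \<subseteq> gen_field \<gamma>" by auto
    have bK: "b \<in> K" using insert.prems by auto
    obtain P1 where P1: "P1 \<noteq> 0" "poly (map_poly of_rat P1) \<gamma> = 0" using alg[OF \<gamma>(1)] by blast
    obtain P2 where P2: "P2 \<noteq> 0" "poly (map_poly of_rat P2) b = 0" using alg[OF bK] by blast
    obtain t :: nat where t: "\<gamma> \<in> gen_field (\<gamma> + of_nat t * b)" "b \<in> gen_field (\<gamma> + of_nat t * b)"
      using primitive_element_step[OF P1 P2] by blast
    have "gen_field \<gamma> \<subseteq> gen_field (\<gamma> + of_nat t * b)"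
      by (rule gen_field_least[OF real_subfield_gen_field t(1)])
    moreover have "\<gamma> + of_nat t * b \<in> K"
      using real_subfieldD(3)[OF F \<gamma>(1) real_subfieldD(4)[OF F real_subfield_of_nat[OF F] bK]] .
    ultimately show ?case using \<gamma> t(2) by blast
  qed
  then obtain \<gamma> where \<gamma>: "\<gamma> \<in> K" "B \<subseteq> gen_field \<gamma>" using B by blast
  have "K \<subseteq> gen_field \<gamma>"
  proof
    fix x assume "x \<in> K"
    then obtain c where c: "x = (\<Sum>b\<in>B. of_rat (c b) * b)" using span by blast
    show "x \<in> gen_field \<gamma>" unfolding c
      by (intro real_subfield_sum real_subfieldD(4) real_subfield_of_rat real_subfield_gen_field)
        (use \<gamma> in auto)
  qed
  moreover have "gen_field \<gamma> \<subseteq> K" by (rule gen_field_least[OF F \<gamma>(1)])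
  ultimately show ?thesis using that \<gamma>(1) by blast
qed

lemma ipoly_scaled_argument:
  fixes P :: "rat poly" and D :: int and q :: "int poly"
  assumes deg: "degree q = degree P"
    and coeff: "\<And>i. i \<le> degree P \<Longrightarrow> of_int (Polynomial.coeff q i) = of_int D ^ (degree P - i) * Polynomial.coeff P i"
  shows "ipoly q (of_int D * x) = of_int D ^ degree P * poly (map_poly of_rat P) (x :: real)"
proof -
  let ?m = "degree P"
  have "ipoly q (of_int D * x) = (\<Sum>i\<le>?m. real_of_int (Polynomial.coeff q i) * (of_int D * x) ^ i)"
    by (simp add: poly_altdef deg coeff_map_poly)
  also have "\<dots> = (\<Sum>i\<le>?m. of_int D ^ ?m * (of_rat (Polynomial.coeff P i) * x ^ i))"
  proof (intro sum.cong refl)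
    fix i assume i: "i \<in> {..?m}"
    have "real_of_int (Polynomial.coeff q i) = of_rat (of_int (Polynomial.coeff q i))" by simp
    also have "\<dots> = of_int D ^ (?m - i) * of_rat (Polynomial.coeff P i)"
      using coeff[of i] i by (simp add: of_rat_mult of_rat_power)
    finally have "real_of_int (Polynomial.coeff q i) = of_int D ^ (?m - i) * of_rat (Polynomial.coeff P i)" .
    moreover have "(of_int D :: real) ^ (?m - i) * of_int D ^ i = of_int D ^ ?m"
      using i by (simp add: power_add[symmetric])
    ultimately show "real_of_int (Polynomial.coeff q i) * (of_int D * x) ^ i =
        of_int D ^ ?m * (of_rat (Polynomial.coeff P i) * x ^ i)"
      by (simp add: power_mult_distrib algebra_simps)
  qed
  also have "\<dots> = of_int D ^ ?m * poly (map_poly of_rat P) x"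
    by (simp add: poly_altdef coeff_map_poly sum_distrib_left)
  finally show ?thesis .
qed

lemma monic_int_poly_of_scaled:
  fixes P :: "rat poly" and D :: int
  assumes mon: "lead_coeff P = 1" and DP: "\<And>i. of_int D * Polynomial.coeff P i \<in> \<int>"
  obtains q :: "int poly" where "lead_coeff q = 1"
    "\<And>x :: real. ipoly q (of_int D * x) = of_int D ^ degree P * poly (map_poly of_rat P) x"
proof -
  define m where "m = degree P"
  define e where "e i = of_int D ^ (m - i) * Polynomial.coeff P i" for i
  have e_Ints: "e i \<in> \<int>" if "i \<le> m" for i
  proof (cases "i = m")
    case True then show ?thesis unfolding e_def using mon m_def by simp
  next
    case False
    then have "m - i = Suc (m - i - 1)" using that by simp
    then have "e i = of_int D ^ (m - i - 1) * (of_int D * Polynomial.coeff P i)"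
      unfolding e_def by (metis mult.assoc power_Suc2 mult.commute)
    then show ?thesis using DP[of i] by simp
  qed
  define q :: "int poly" where "q = (\<Sum>i\<le>m. Polynomial.monom \<lfloor>e i\<rfloor> i)"
  have coeff_q: "Polynomial.coeff q i = (if i \<le> m then \<lfloor>e i\<rfloor> else 0)" for i
    unfolding q_def by (simp add: coeff_sum coeff_monom)
  have em: "e m = 1" unfolding e_def using mon m_def by simp
  have deg_q: "degree q = m"
  proof (rule antisym)
    show "degree q \<le> m" by (rule degree_le) (auto simp: coeff_q)
    show "m \<le> degree q" by (rule le_degree) (simp add: coeff_q em)
  qed
  have "of_int (Polynomial.coeff q i) = e i" if "i \<le> m" for i
    using e_Ints[OF that] that by (auto simp: coeff_q elim!: Ints_cases)
  then have "ipoly q (of_int D * x) = of_int D ^ degree P * poly (map_poly of_rat P) x" for x :: real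
    by (intro ipoly_scaled_argument) (auto simp: deg_q m_def e_def)
  moreover have "lead_coeff q = 1" using deg_q by (simp add: coeff_q em)
  ultimately show ?thesis using that by blast
qed

lemma algebraic_integer_multiple:
  fixes P :: "rat poly" and \<gamma> :: real
  assumes mon: "lead_coeff P = 1" and P\<gamma>: "poly (map_poly of_rat P) \<gamma> = 0"
  obtains D :: int and q :: "int poly" where "D > 0" "lead_coeff q = 1" "ipoly q (of_int D * \<gamma>) = 0"
proof -
  obtain D :: int and P' where D: "rat_to_int_poly P = (D, P')" by (metis surj_pair)
  have D0: "D > 0" using rat_to_int_poly(2)[OF D] .
  have "of_int D * Polynomial.coeff P i \<in> \<int>" for i
    using rat_to_int_poly(1)[OF D] D0 by (simp add: coeff_map_poly field_simps)
  then obtain q where q: "lead_coeff q = 1"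
    "\<And>x :: real. ipoly q (of_int D * x) = of_int D ^ degree P * poly (map_poly of_rat P) x"
    using monic_int_poly_of_scaled[OF mon] by blast
  show ?thesis using that[OF D0 q(1)] q(2)[of \<gamma>] P\<gamma> by simp
qed

lemma algebraic_integer_generator:
  assumes K: "real_number_field K"
  obtains \<theta> p where "irreducible p" "lead_coeff p = 1" "ipoly p \<theta> = 0" "gen_field \<theta> = K"
proof -
  obtain \<gamma> where \<gamma>: "\<gamma> \<in> K" "gen_field \<gamma> = K" using primitive_element[OF K] by blast
  obtain P :: "rat poly" where P: "lead_coeff P = 1" "poly (map_poly of_rat P) \<gamma> = 0"
    using real_number_field_algebraic[OF K \<gamma>(1)] by blast
  obtain D :: int and q :: "int poly" where Dq: "D > 0" "lead_coeff q = 1" "ipoly q (of_int D * \<gamma>) = 0"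
    using algebraic_integer_multiple[OF P] by blast
  define \<theta> where "\<theta> = of_int D * \<gamma>"
  have "ipoly q (complex_of_real \<theta>) = 0" using Dq(3) ipoly_complex_of_real[of q \<theta>] unfolding \<theta>_def by simp
  then obtain p where p: "irreducible p" "lead_coeff p = 1" "ipoly p (complex_of_real \<theta>) = 0"
    using monic_irreducible_factor[OF Dq(2)] by blast
  have "\<theta> \<in> gen_field \<gamma>" unfolding \<theta>_def
    by (intro real_subfieldD(4) real_subfield_of_int real_subfield_gen_field gen_field_self)
  moreover have "\<theta> / of_int D \<in> gen_field \<theta>"
    by (rule real_subfield_divide[OF real_subfield_gen_field gen_field_self
          real_subfield_of_int[OF real_subfield_gen_field]])
  then have "\<gamma> \<in> gen_field \<theta>" unfolding \<theta>_def using Dq(1) by simp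
  ultimately have "gen_field \<theta> = K" using \<gamma>(2) gen_field_eqI by blast
  moreover have "ipoly p \<theta> = 0" using p(3) by (simp add: ipoly_complex_of_real)
  ultimately show ?thesis using that p(1,2) by blast
qed

lemma simultaneous_power_near_1:
  fixes U :: "complex set"
  assumes U: "finite U" and unit: "\<And>u. u \<in> U \<Longrightarrow> cmod u = 1"
  obtains k where "k > 0" "\<And>u. u \<in> U \<Longrightarrow> cmod (u ^ (k * m) - 1) < 1/5"
proof -
  define T where "T = {-10..10::int}"
  define h where "h j = restrict (\<lambda>u. (\<lfloor>10 * Re (u ^ (j * m))\<rfloor>, \<lfloor>10 * Im (u ^ (j * m))\<rfloor>)) U" for j
  define PP where "PP = PiE U (\<lambda>_. T \<times> T)"
  have fin: "finite PP" unfolding PP_def T_def using U by (intro finite_PiE) auto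
  have "h j \<in> PP" for j
  proof -
    have "\<lfloor>10 * Re (u ^ (j * m))\<rfloor> \<in> T \<and> \<lfloor>10 * Im (u ^ (j * m))\<rfloor> \<in> T" if u: "u \<in> U" for u
    proof -
      have "cmod (u ^ (j * m)) = 1" using unit[OF u] by (simp add: norm_power)
      then have "\<bar>Re (u ^ (j * m))\<bar> \<le> 1" "\<bar>Im (u ^ (j * m))\<bar> \<le> 1"
        using abs_Re_le_cmod abs_Im_le_cmod by metis+
      then show ?thesis unfolding T_def by (auto simp: abs_le_iff)
    qed
    then show ?thesis unfolding h_def PP_def by auto
  qed
  then have "card (h ` {0..card PP}) \<le> card PP" using fin by (intro card_mono) auto
  also have "\<dots> < card {0..card PP}" by simp
  finally have "\<not> inj_on h {0..card PP}" by (rule pigeonhole)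
  then obtain i j where ij: "i < j" "h i = h j"
    unfolding inj_on_def by (metis linorder_neqE_nat)
  show ?thesis
  proof (rule that[of "j - i"])
    show "j - i > 0" using ij(1) by simp
    fix u assume u: "u \<in> U"
    define x where "x = u ^ (j * m)"
    define y where "y = u ^ (i * m)"
    have "\<lfloor>10 * Re x\<rfloor> = \<lfloor>10 * Re y\<rfloor>" "\<lfloor>10 * Im x\<rfloor> = \<lfloor>10 * Im y\<rfloor>"
      using fun_cong[OF ij(2), of u] u unfolding h_def x_def y_def by simp_all
    then have "\<bar>Re x - Re y\<bar> < 1/10" "\<bar>Im x - Im y\<bar> < 1/10" by linarith+
    then have "cmod (x - y) < 1/5" using cmod_le[of "x - y"] by simp
    have "x - y = y * (u ^ ((j - i) * m) - 1)"
      using ij(1) unfolding x_def y_def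
      by (simp add: power_add[symmetric] diff_mult_distrib algebra_simps)
    moreover have "cmod y = 1" unfolding y_def using unit[OF u] by (simp add: norm_power)
    ultimately show "cmod (u ^ ((j - i) * m) - 1) < 1/5"
      using \<open>cmod (x - y) < 1/5\<close> by (simp add: norm_mult)
  qed
qed

lemma infinitely_many_powers_near_1:
  fixes U :: "complex set"
  assumes "finite U" and "\<And>u. u \<in> U \<Longrightarrow> cmod u = 1"
  shows "\<exists>\<^sub>\<infinity>a. \<forall>u\<in>U. Re (u ^ a) \<ge> 4/5"
  unfolding INFM_nat_le
proof
  fix M
  obtain k where k: "k > 0" "\<And>u. u \<in> U \<Longrightarrow> cmod (u ^ (k * Suc M) - 1) < 1/5"
    using simultaneous_power_near_1[OF assms] by blast
  have "Re (u ^ (k * Suc M)) \<ge> 4/5" if "u \<in> U" for u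
  proof -
    have "\<bar>Re (u ^ (k * Suc M) - 1)\<bar> < 1/5"
      using k(2)[OF that] abs_Re_le_cmod le_less_trans by blast
    then have "\<bar>Re (u ^ (k * Suc M)) - 1\<bar> < 1/5" by simp
    then show ?thesis by linarith
  qed
  moreover have "1 * Suc M \<le> k * Suc M" using k(1) by (intro mult_le_mono1) simp
  then have "M \<le> k * Suc M" by simp
  ultimately show "\<exists>a\<ge>M. \<forall>u\<in>U. Re (u ^ a) \<ge> 4/5" by blast
qed

text \<open>Writing \<open>z\<^sup>a = s \<omega>\<close> with \<open>Re \<omega> \<ge> 4/5\<close>, the number \<open>u = z\<^sup>a - z\<^sup>a\<^sup>+\<^sup>b\<close> lies in a small lens around the
  positive real axis, so both \<open>u\<close> and \<open>1 - u\<close> have modulus less than \<open>1\<close>.\<close>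

lemma power_diff_estimates:
  fixes z :: complex
  assumes z0: "z \<noteq> 0" and b: "cmod z ^ b \<le> 1/8" and a: "cmod z ^ a \<le> 1/16"
    and re: "Re ((z / of_real (cmod z)) ^ a) \<ge> 4/5"
  shows "Re (z ^ a - z ^ (a + b)) \<ge> 27/40 * cmod z ^ a"
    "cmod (z ^ a - z ^ (a + b)) \<le> 9/8 * cmod z ^ a"
    "cmod (z ^ a - z ^ (a + b)) < 1"
    "cmod (1 - (z ^ a - z ^ (a + b))) < 1"
proof -
  define s where "s = cmod z ^ a"
  define u where "u = z ^ a - z ^ (a + b)"
  have s0: "s > 0" unfolding s_def using z0 by simp
  have "z ^ a = of_real s * (z / of_real (cmod z)) ^ a"
    unfolding s_def using z0 by (simp add: power_divide)
  then have "Re (z ^ a) = s * Re ((z / of_real (cmod z)) ^ a)" by simp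
  then have r1: "Re (z ^ a) \<ge> 4/5 * s" using re s0 by (simp add: mult_left_mono)
  have "cmod (z ^ (a + b)) = s * cmod z ^ b" unfolding s_def by (simp add: norm_mult norm_power power_add)
  also have "\<dots> \<le> s / 8" using b s0 by (simp add: mult_left_mono)
  finally have n2: "cmod (z ^ (a + b)) \<le> s / 8" .
  then have "Re (z ^ (a + b)) \<le> s / 8" using abs_Re_le_cmod[of "z ^ (a+b)"] by linarith
  then show re_u: "Re (z ^ a - z ^ (a + b)) \<ge> 27/40 * cmod z ^ a" using r1 unfolding s_def by simp
  have "cmod u \<le> cmod (z ^ a) + cmod (z ^ (a + b))" unfolding u_def by (rule norm_triangle_ineq4)
  also have "\<dots> \<le> s + s / 8" using n2 unfolding s_def by (simp add: norm_power)
  finally have norm_u: "cmod u \<le> 9/8 * s" by simp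
  then show "cmod (z ^ a - z ^ (a + b)) \<le> 9/8 * cmod z ^ a" unfolding u_def s_def .
  have s16: "s \<le> 1/16" using a unfolding s_def .
  then show "cmod (z ^ a - z ^ (a + b)) < 1" using norm_u unfolding u_def by simp
  have "(cmod (1 - u))\<^sup>2 = (1 - Re u)\<^sup>2 + (Im u)\<^sup>2" by (simp add: cmod_power2)
  also have "\<dots> = 1 - 2 * Re u + ((Re u)\<^sup>2 + (Im u)\<^sup>2)" by (simp add: power2_eq_square algebra_simps)
  also have "\<dots> = 1 - 2 * Re u + (cmod u)\<^sup>2" by (simp add: cmod_power2)
  also have "\<dots> \<le> 1 - 2 * (27/40 * s) + (9/8 * s)\<^sup>2"
    using re_u norm_u unfolding u_def s_def by (intro add_mono diff_mono power_mono) auto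
  also have "\<dots> < 1" using s0 s16 by (simp add: power2_eq_square algebra_simps)
  finally have "(cmod (1 - u))\<^sup>2 < 1\<^sup>2" by simp
  then show "cmod (1 - (z ^ a - z ^ (a + b))) < 1" unfolding u_def
    by (rule power_less_imp_less_base) simp
qed

lemma norm_prod_list_less_1:
  fixes ws :: "complex list"
  assumes "\<And>w. w \<in> set ws \<Longrightarrow> cmod w < 1" "ws \<noteq> []"
  shows "cmod (prod_list ws) < 1"
  using assms
proof (induction ws)
  case (Cons w ws)
  have w: "cmod w < 1" using Cons.prems(1) by simp
  show ?case
  proof (cases "ws = []")
    case False
    then have "cmod (prod_list ws) < 1" using Cons by simp
    then have "cmod w * cmod (prod_list ws) < 1 * 1"
      using w by (intro mult_strict_mono') auto
    then show ?thesis by (simp add: norm_mult)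
  qed (use w in simp)
qed simp

section \<open>A Dirichlet-type box principle\<close>

lemma box_count_less:
  fixes D :: real and N m n :: nat and L :: int
  assumes mn: "m < n" and D: "D \<ge> 1" and N: "real N \<ge> D ^ (n - 1)"
    and L: "real_of_int (2 * L + 1) \<le> D * real N" "L \<ge> 0"
  shows "nat (2 * L + 1) ^ m < (N + 1) ^ n"
proof -
  have "real (nat (2 * L + 1) ^ m) \<le> real (nat (2 * L + 1) ^ (n - 1))"
    using mn L(2) by (intro of_nat_mono power_increasing) auto
  also have "\<dots> = real_of_int (2 * L + 1) ^ (n - 1)" using L(2) by simp
  also have "\<dots> \<le> (D * real N) ^ (n - 1)" using L by (intro power_mono) auto
  also have "\<dots> = D ^ (n - 1) * real N ^ (n - 1)" by (simp add: power_mult_distrib)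
  also have "\<dots> \<le> real N * real N ^ (n - 1)" using N by (intro mult_right_mono) auto
  also have "\<dots> = real N ^ n" using mn by (cases n) auto
  also have "\<dots> < (real N + 1) ^ n" using mn by (intro power_strict_mono) auto
  also have "\<dots> = real ((N + 1) ^ n)" by (simp add: add.commute)
  finally show ?thesis by linarith
qed

text \<open>Of the \<open>(N+1)\<^sup>n\<close> points of \<open>{0..N}\<^sup>n\<close>, two fall into the same cell of side \<open>\<epsilon>\<close> in the
  image, since the number of cells grows only like \<open>N\<^sup>n\<^sup>-\<^sup>1\<close>.\<close>

lemma box_parameters:
  fixes C \<epsilon> :: real and m n :: nat
  assumes C: "C \<ge> 1" and \<epsilon>: "\<epsilon> > 0" and mn: "m < n"
  obtains N :: nat and L :: int where "real N * C / \<epsilon> \<le> L" "nat (2 * L + 1) ^ m < (N + 1) ^ n"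
proof -
  define D where "D = 2 * C / \<epsilon> + 3"
  define N :: nat where "N = nat \<lceil>D ^ (n - 1)\<rceil> + 1"
  have N: "real N \<ge> D ^ (n - 1)" "N \<ge> 1" unfolding N_def by linarith+
  define L :: int where "L = \<lceil>real N * C / \<epsilon>\<rceil>"
  have "real N * C / \<epsilon> \<ge> 0" using C \<epsilon> by simp
  then have L0: "L \<ge> 0" unfolding L_def by linarith
  have "real_of_int (2 * L + 1) \<le> 2 * (real N * C / \<epsilon>) + 3" unfolding L_def by linarith
  also have "\<dots> \<le> 2 * (real N * C / \<epsilon>) + 3 * real N" using N(2) by simp
  also have "\<dots> = D * real N" unfolding D_def by (simp add: algebra_simps)
  finally have L1: "real_of_int (2 * L + 1) \<le> D * real N" .
  have "2 * C / \<epsilon> \<ge> 0" using C \<epsilon> by simp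
  then have "D \<ge> 1" unfolding D_def by linarith
  then have "nat (2 * L + 1) ^ m < (N + 1) ^ n" by (rule box_count_less[OF mn _ N(1) L1 L0])
  moreover have "real N * C / \<epsilon> \<le> L" unfolding L_def by linarith
  ultimately show ?thesis using that by blast
qed

lemma abs_linear_form_on_box:
  fixes A :: "nat \<Rightarrow> real" and c :: "nat \<Rightarrow> int"
  assumes c: "c \<in> PiE {..<n} (\<lambda>_. {0..int N})"
  shows "\<bar>\<Sum>j<n. of_int (c j) * A j\<bar> \<le> real N * (\<Sum>j<n. \<bar>A j\<bar>)"
proof -
  have "\<bar>\<Sum>j<n. of_int (c j) * A j\<bar> \<le> (\<Sum>j<n. \<bar>of_int (c j) * A j\<bar>)" by (rule sum_abs)
  also have "\<dots> \<le> (\<Sum>j<n. real N * \<bar>A j\<bar>)"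
  proof (intro sum_mono)
    fix j assume "j \<in> {..<n}"
    then have "c j \<in> {0..int N}" using c by (rule PiE_mem[rotated])
    then show "\<bar>of_int (c j) * A j\<bar> \<le> real N * \<bar>A j\<bar>" by (simp add: abs_mult mult_right_mono)
  qed
  also have "\<dots> = real N * (\<Sum>j<n. \<bar>A j\<bar>)" by (simp add: sum_distrib_left)
  finally show ?thesis .
qed

lemma floor_divide_in_range:
  fixes x B \<epsilon> :: real
  assumes "\<bar>x\<bar> \<le> B" "B / \<epsilon> \<le> L" "\<epsilon> > 0"
  shows "\<lfloor>x / \<epsilon>\<rfloor> \<in> {-L..L}"
proof -
  have "\<bar>x / \<epsilon>\<bar> \<le> B / \<epsilon>" using assms by (simp add: abs_divide divide_right_mono)
  then have "- (x / \<epsilon>) \<le> B / \<epsilon>" "x / \<epsilon> \<le> B / \<epsilon>" by (rule abs_le_D2, rule abs_le_D1)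
  then show ?thesis using assms(2) by (simp, linarith)
qed

lemma small_integer_combination:
  fixes A :: "'i \<Rightarrow> nat \<Rightarrow> real"
  assumes I: "finite I" "card I < n" and \<epsilon>: "\<epsilon> > 0"
  obtains c :: "nat \<Rightarrow> int" where "\<exists>j<n. c j \<noteq> 0"
    "\<And>i. i \<in> I \<Longrightarrow> \<bar>\<Sum>j<n. of_int (c j) * A i j\<bar> < \<epsilon>"
proof -
  define C where "C = 1 + (\<Sum>i\<in>I. \<Sum>j<n. \<bar>A i j\<bar>)"
  have C1: "C \<ge> 1" unfolding C_def by (simp add: sum_nonneg)
  have C: "(\<Sum>j<n. \<bar>A i j\<bar>) \<le> C" if "i \<in> I" for i
    using I(1) that member_le_sum[of i I "\<lambda>i. \<Sum>j<n. \<bar>A i j\<bar>"] unfolding C_def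
    by (simp add: sum_nonneg)
  obtain N L where NL: "real N * C / \<epsilon> \<le> L" "nat (2 * L + 1) ^ card I < (N + 1) ^ n"
    using box_parameters[OF C1 \<epsilon> I(2)] by blast
  define lin where "lin c i = (\<Sum>j<n. of_int (c j) * A i j)" for c :: "nat \<Rightarrow> int" and i
  define box where "box = PiE {..<n} (\<lambda>_. {0..int N})"
  define cell where "cell c = restrict (\<lambda>i. \<lfloor>lin c i / \<epsilon>\<rfloor>) I" for c
  have lin_bound: "\<bar>lin c i\<bar> \<le> real N * C" if c: "c \<in> box" and i: "i \<in> I" for c i
    using abs_linear_form_on_box[of c n N "A i"] c mult_left_mono[OF C[OF i], of "real N"]
    unfolding lin_def box_def by simp
  have "cell c \<in> PiE I (\<lambda>_. {-L..L})" if c: "c \<in> box" for c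
    using floor_divide_in_range[OF lin_bound[OF c] NL(1) \<epsilon>] unfolding cell_def
    by (simp add: restrict_PiE_iff)
  then have "card (cell ` box) \<le> card (PiE I (\<lambda>_. {-L..L}))"
    using I(1) by (intro card_mono finite_PiE) auto
  also have "\<dots> = nat (2 * L + 1) ^ card I" using I(1) by (simp add: card_PiE)
  also have "\<dots> < (N + 1) ^ n" by (rule NL(2))
  also have "\<dots> = card box" unfolding box_def by (simp add: card_PiE nat_add_distrib)
  finally have "\<not> inj_on cell box" by (rule pigeonhole)
  then obtain c c' where cc: "c \<in> box" "c' \<in> box" "c \<noteq> c'" "cell c = cell c'"
    unfolding inj_on_def by blast
  show ?thesis
  proof (rule that[of "\<lambda>j. c j - c' j"])
    show "\<exists>j<n. c j - c' j \<noteq> 0"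
    proof (rule ccontr)
      assume "\<not> (\<exists>j<n. c j - c' j \<noteq> 0)"
      then have "c = c'" using cc(1,2) unfolding box_def by (intro PiE_ext) auto
      then show False using cc(3) by simp
    qed
    fix i assume i: "i \<in> I"
    have "\<lfloor>lin c i / \<epsilon>\<rfloor> = \<lfloor>lin c' i / \<epsilon>\<rfloor>" using fun_cong[OF cc(4), of i] i unfolding cell_def by simp
    then have "\<bar>lin c i / \<epsilon> - lin c' i / \<epsilon>\<bar> < 1" by linarith
    then have "\<bar>lin c i - lin c' i\<bar> < \<epsilon>" using \<epsilon> by (simp add: diff_divide_distrib[symmetric] abs_divide)
    then show "\<bar>\<Sum>j<n. of_int (c j - c' j) * A i j\<bar> < \<epsilon>"
      unfolding lin_def by (simp add: left_diff_distrib sum_subtractf)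
  qed
qed

lemma card_real_upper_coordinates:
  fixes R :: "complex set"
  assumes fin: "finite R" and cnj: "\<And>z. z \<in> R \<Longrightarrow> cnj z \<in> R"
  shows "card ({z\<in>R. Im z = 0} \<times> {0::nat} \<union> {z\<in>R. Im z > 0} \<times> {0, 1}) = card R"
proof -
  define Rr where "Rr = {z\<in>R. Im z = 0}"
  define Ru where "Ru = {z\<in>R. Im z > 0}"
  define Rl where "Rl = {z\<in>R. Im z < 0}"
  have "bij_betw cnj Ru Rl"
    by (rule bij_betwI[of cnj _ _ cnj]) (auto simp: Ru_def Rl_def cnj)
  then have "card Rl = card Ru" by (simp add: bij_betw_same_card)
  moreover have "R = Rr \<union> (Ru \<union> Rl)" unfolding Rr_def Ru_def Rl_def by auto
  moreover have "card (Rr \<union> (Ru \<union> Rl)) = card Rr + (card Ru + card Rl)"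
    using fin unfolding Rr_def Ru_def Rl_def by (subst card_Un_disjoint, auto)+
  moreover have "card (Rr \<times> {0::nat} \<union> Ru \<times> {0, 1}) = card Rr + 2 * card Ru"
    using fin unfolding Rr_def Ru_def by (subst card_Un_disjoint) (auto simp: card_cartesian_product)
  ultimately show ?thesis unfolding Rr_def Ru_def by simp
qed

section \<open>Conjugates of an algebraic integer\<close>

lemma ipoly_cnj: "ipoly p (cnj z) = cnj (ipoly p z)"
proof -
  have "map_poly cnj (of_int_poly p :: complex poly) = of_int_poly p"
    by (subst map_poly_map_poly) (auto simp: o_def)
  then show ?thesis using poly_map_poly_cnj[of "of_int_poly p" "cnj z"] by simp
qed

text \<open>Siegel's lemma for the \<open>card R\<close> real coordinates of \<open>R\<close>: real parts at real points, real and
  imaginary parts at one member of each pair of complex conjugate points.\<close>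

lemma small_int_poly_on_cnj_closed:
  fixes R :: "complex set"
  assumes fin: "finite R" and cnj: "\<And>z. z \<in> R \<Longrightarrow> cnj z \<in> R" and card: "card R < n"
  obtains f :: "int poly" where "f \<noteq> 0" "degree f < n" "\<And>z. z \<in> R \<Longrightarrow> cmod (ipoly f z) < 1/4"
proof -
  define I where "I = {z\<in>R. Im z = 0} \<times> {0::nat} \<union> {z\<in>R. Im z > 0} \<times> {0, 1}"
  define A where "A ik j = (if snd ik = 0 then Re (fst ik ^ j) else Im (fst ik ^ j))"
    for ik :: "complex \<times> nat" and j
  have "finite I" unfolding I_def using fin by auto
  moreover have "card I < n" using card_real_upper_coordinates[OF fin cnj] card unfolding I_def by simp
  ultimately obtain c where c: "\<exists>j<n. c j \<noteq> 0"
    "\<And>i. i \<in> I \<Longrightarrow> \<bar>\<Sum>j<n. of_int (c j) * A i j\<bar> < 1/8"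
    using small_integer_combination[of I n "1/8" A] by auto
  define f :: "int poly" where "f = (\<Sum>j<n. Polynomial.monom (c j) j)"
  have coeff_f: "Polynomial.coeff f j = (if j < n then c j else 0)" for j
    unfolding f_def by (simp add: coeff_sum coeff_monom)
  have val: "ipoly f z = (\<Sum>j<n. of_int (c j) * z ^ j)" for z :: complex
    unfolding f_def by (simp add: hom_distribs poly_sum poly_monom)
  have Re_f: "Re (ipoly f z) = (\<Sum>j<n. of_int (c j) * A (z, 0) j)"
    and Im_f: "Im (ipoly f z) = (\<Sum>j<n. of_int (c j) * A (z, 1) j)" for z
    unfolding val A_def by (simp_all add: Re_sum Im_sum)
  have upper: "cmod (ipoly f z) < 1/4" if z: "z \<in> R" "Im z \<ge> 0" for z
  proof (cases "Im z = 0")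
    case True
    then have "(z, 0) \<in> I" using z unfolding I_def by auto
    then have "\<bar>Re (ipoly f z)\<bar> < 1/8" using c(2) Re_f by simp
    moreover have z_real: "z = complex_of_real (Re z)" using True by (simp add: complex_eq_iff)
    have "Im (ipoly f (complex_of_real (Re z))) = 0" by (simp add: ipoly_complex_of_real)
    then have "Im (ipoly f z) = 0" using z_real by simp
    ultimately show ?thesis by (simp add: cmod_eq_Re)
  next
    case False
    then have "(z, 0) \<in> I" "(z, 1) \<in> I" using z unfolding I_def by auto
    then have "\<bar>Re (ipoly f z)\<bar> < 1/8" "\<bar>Im (ipoly f z)\<bar> < 1/8" using c(2) Re_f Im_f by simp_all
    then show ?thesis using cmod_le[of "ipoly f z"] by simp
  qed
  show ?thesis
  proof (rule that)
    show "f \<noteq> 0" using c(1) coeff_f by (metis coeff_0)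
    have "degree f \<le> n - 1" by (rule degree_le) (auto simp: coeff_f)
    then show "degree f < n" using card by simp
    show "cmod (ipoly f z) < 1/4" if z: "z \<in> R" for z
    proof (cases "Im z \<ge> 0")
      case False
      then have "cmod (ipoly f (cnj z)) < 1/4" using upper cnj[OF z] by simp
      then show ?thesis by (simp add: ipoly_cnj)
    qed (use upper z in simp)
  qed
qed

locale alg_int =
  fixes p :: "int poly" and \<theta> :: real
  assumes irreducible: "irreducible p" and monic: "lead_coeff p = 1" and root: "ipoly p \<theta> = 0"
begin

definition other_roots :: "complex set" where
  "other_roots = {z. ipoly p z = 0 \<and> z \<noteq> complex_of_real \<theta>}"

lemma root_complex: "ipoly p (complex_of_real \<theta>) = 0"
  using root by (simp add: ipoly_complex_of_real)

lemma degree_pos: "degree p > 0"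
  by (rule degree_monic_irreducible_pos[OF irreducible monic])

lemma finite_other_roots: "finite other_roots"
  unfolding other_roots_def using monic
  by (intro finite_subset[OF _ poly_roots_finite[of "of_int_poly p :: complex poly"]]) auto

lemma card_other_roots: "card other_roots = degree p - 1"
proof -
  have "{z :: complex. ipoly p z = 0} = insert (complex_of_real \<theta>) other_roots"
    using root_complex unfolding other_roots_def by auto
  then show ?thesis
    using card_roots_irreducible_int_poly[OF irreducible monic] finite_other_roots
    unfolding other_roots_def by simp
qed

lemma cnj_other_roots: "z \<in> other_roots \<Longrightarrow> cnj z \<in> other_roots"
  unfolding other_roots_def by (auto simp: ipoly_cnj complex_eq_iff)

lemma Rats_if_no_other_roots:
  assumes "other_roots = {}"
  shows "\<theta> \<in> \<rat>"
proof -
  have "degree p = 1" using card_other_roots degree_pos assms by simp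
  then have "ipoly p \<theta> = of_int (Polynomial.coeff p 0) + \<theta>"
    using monic by (simp add: poly_altdef coeff_map_poly)
  then have "\<theta> = - of_int (Polynomial.coeff p 0)" using root by simp
  then show ?thesis by simp
qed

lemma zero_not_in_other_roots: "\<theta> \<noteq> 0 \<Longrightarrow> 0 \<notin> other_roots"
  using ipoly_0_neq_0[OF irreducible monic root_complex] unfolding other_roots_def by auto

lemma gen_field_ipoly:
  assumes distinct: "\<And>z. z \<in> other_roots \<Longrightarrow> ipoly f z \<noteq> complex_of_real (ipoly f \<theta>)"
  shows "gen_field (ipoly f \<theta>) = gen_field \<theta>"
proof -
  define \<alpha> where "\<alpha> = ipoly f \<theta>"
  let ?F = "gen_field \<alpha>"
  have F: "real_subfield ?F" by (rule real_subfield_gen_field)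
  have int_coeffs: "coeffs_in ?F (of_int_poly g)" for g
    using real_subfield_of_int[OF F] by (intro coeffs_in_map_poly) auto
  have "\<theta> \<in> ?F"
  proof (rule unique_common_root_in_subfield[OF F])
    let ?H = "[:\<alpha>:] - of_int_poly f :: real poly"
    show "coeffs_in ?F (of_int_poly p)" by (rule int_coeffs)
    show "coeffs_in ?F ?H"
      by (intro coeffs_in_diff is_subring_real_subfield[OF F] coeffs_in_const int_coeffs gen_field_self)
    show "of_int_poly p \<noteq> (0 :: real poly)" using monic by auto
    show "ipoly p \<theta> = 0" by (rule root)
    show "poly ?H \<theta> = 0" unfolding \<alpha>_def by simp
    show "rsquarefree (map_poly complex_of_real (of_int_poly p))"
      using rsquarefree_irreducible_int_poly[OF irreducible monic]
      by (simp add: map_poly_complex_of_real_of_int)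
    fix w assume w1: "poly (map_poly complex_of_real (of_int_poly p)) w = 0"
      and w2: "poly (map_poly complex_of_real ?H) w = 0"
    have "map_poly complex_of_real ?H = [:complex_of_real \<alpha>:] - of_int_poly f"
      by (simp add: hom_distribs map_poly_complex_of_real_of_int)
    then have "ipoly f w = complex_of_real \<alpha>" using w2 by simp
    moreover have "ipoly p w = 0" using w1 by (simp add: map_poly_complex_of_real_of_int)
    ultimately show "w = complex_of_real \<theta>" using distinct unfolding other_roots_def \<alpha>_def by auto
  qed
  moreover have "\<alpha> \<in> gen_field \<theta>"
    unfolding \<alpha>_def by (rule real_subfield_ipoly[OF real_subfield_gen_field gen_field_self])
  ultimately show ?thesis unfolding \<alpha>_def using gen_field_eqI by blast
qed

lemma pisot_ipoly:
  assumes gt_1: "ipoly f \<theta> > 1" and small: "\<And>z. z \<in> other_roots \<Longrightarrow> cmod (ipoly f z) < 1"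
  shows "pisot (ipoly f \<theta>)"
proof -
  define \<alpha> where "\<alpha> = ipoly f \<theta>"
  obtain q where q: "lead_coeff q = 1"
    "\<And>z :: complex. ipoly p z = 0 \<Longrightarrow> ipoly q (ipoly f z) = 0"
    "\<And>w :: complex. ipoly q w = 0 \<Longrightarrow> \<exists>z. ipoly p z = 0 \<and> w = ipoly f z"
    using conjugate_values_poly[OF irreducible monic] by blast
  have f\<theta>: "ipoly f (complex_of_real \<theta>) = complex_of_real \<alpha>"
    unfolding \<alpha>_def by (rule ipoly_complex_of_real)
  then have "ipoly q (complex_of_real \<alpha>) = 0" using q(2)[OF root_complex] by simp
  then obtain r where r: "irreducible r" "lead_coeff r = 1" "r dvd q" "ipoly r (complex_of_real \<alpha>) = 0"
    using monic_irreducible_factor[OF q(1)] by blast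
  have "cmod w < 1" if w: "ipoly r w = 0" "w \<noteq> complex_of_real \<alpha>" for w
  proof -
    have "of_int_poly r dvd (of_int_poly q :: complex poly)"
      using r(3) by (rule of_int_poly_hom.hom_dvd)
    then have "ipoly q w = 0" using w(1) by (metis dvd_trans poly_eq_0_iff_dvd)
    then obtain z where z: "ipoly p z = 0" "w = ipoly f z" using q(3) by blast
    then have "z \<in> other_roots" using w(2) f\<theta> unfolding other_roots_def by auto
    then show ?thesis using small z(2) by simp
  qed
  moreover have "ipoly r \<alpha> = 0" using r(4) by (simp add: ipoly_complex_of_real)
  ultimately show ?thesis unfolding pisot_def \<alpha>_def using gt_1 r(1,2) by blast
qed

lemma ipoly_mem_pisot_set:
  assumes gt_1: "ipoly f \<theta> > 1" and small: "\<And>z. z \<in> other_roots \<Longrightarrow> cmod (ipoly f z) < 1"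
  shows "ipoly f \<theta> \<in> pisot_set (gen_field \<theta>)"
proof -
  have "ipoly f z \<noteq> complex_of_real (ipoly f \<theta>)" if "z \<in> other_roots" for z
  proof
    assume "ipoly f z = complex_of_real (ipoly f \<theta>)"
    then have "cmod (ipoly f z) = ipoly f \<theta>" using gt_1 by simp
    then show False using small[OF that] gt_1 by simp
  qed
  then have "gen_field (ipoly f \<theta>) = gen_field \<theta>" by (rule gen_field_ipoly)
  moreover have "ipoly f \<theta> \<in> gen_field \<theta>"
    by (rule real_subfield_ipoly[OF real_subfield_gen_field gen_field_self])
  ultimately show ?thesis using pisot_ipoly[OF assms] unfolding pisot_set_def by simp
qed

lemma pisot_ipoly_conjugate:
  assumes pisot: "pisot (ipoly f \<theta>)" and z: "ipoly p z = 0"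
  shows "ipoly f z = complex_of_real (ipoly f \<theta>) \<or> cmod (ipoly f z) < 1"
proof -
  obtain q :: "int poly" where q: "ipoly q (ipoly f \<theta>) = 0"
    "\<And>w. ipoly q w = 0 \<Longrightarrow> w \<noteq> complex_of_real (ipoly f \<theta>) \<Longrightarrow> cmod w < 1"
    using pisot unfolding pisot_def by blast
  have "ipoly (pcompose q f) (complex_of_real \<theta>) = 0"
    using q(1) by (simp add: hom_distribs poly_pcompose ipoly_complex_of_real)
  then have "ipoly (pcompose q f) z = 0"
    using ipoly_root_conjugate[OF irreducible monic root_complex _ z] by blast
  then show ?thesis using q(2) by (auto simp: hom_distribs poly_pcompose)
qed

text \<open>The norm of the nonzero algebraic integer \<open>f(\<theta>)\<close>, the product of its conjugates, is a
  nonzero integer.\<close>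

lemma ex_conjugate_norm_ge_1:
  assumes f0: "f \<noteq> 0" and deg: "degree f < degree p"
  shows "\<exists>z. ipoly p z = 0 \<and> cmod (ipoly f z) \<ge> 1"
proof (rule ccontr)
  assume "\<not> ?thesis"
  then have small: "cmod (ipoly f z) < 1" if "ipoly p z = 0" for z :: complex
    using that by force
  obtain q where q: "lead_coeff q = 1"
    "\<And>z :: complex. ipoly p z = 0 \<Longrightarrow> ipoly q (ipoly f z) = 0"
    "\<And>w :: complex. ipoly q w = 0 \<Longrightarrow> \<exists>z. ipoly p z = 0 \<and> w = ipoly f z"
    using conjugate_values_poly[OF irreducible monic] by blast
  let ?qc = "of_int_poly q :: complex poly"
  obtain ws where ws: "Polynomial.smult (lead_coeff ?qc) (\<Prod>a\<leftarrow>ws. [:- a, 1:]) = ?qc"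
    using fundamental_theorem_algebra_factorized[of ?qc] by blast
  have qc: "?qc = (\<Prod>a\<leftarrow>ws. [:- a, 1:])" using ws q(1) by simp
  have "cmod w < 1" if "w \<in> set (map uminus ws)" for w
  proof -
    from that obtain x where x: "x \<in> set ws" "w = - x" by auto
    have "poly ?qc x = 0" unfolding qc using linear_poly_root[OF x(1)] .
    then obtain z where "ipoly p z = 0" "x = ipoly f z" using q(3) by blast
    then show ?thesis using small x(2) by simp
  qed
  moreover have "ws \<noteq> []"
    using qc q(2)[OF root_complex] by auto
  ultimately have lt: "cmod (prod_list (map uminus ws)) < 1"
    by (intro norm_prod_list_less_1) auto
  have e1: "ipoly q 0 = prod_list (map uminus ws)"
    unfolding qc by (simp add: poly_prod_list o_def)
  have e2: "ipoly q 0 = (of_int (Polynomial.coeff q 0) :: complex)"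
    by (simp add: poly_0_coeff_0 coeff_map_poly)
  from lt have "cmod (of_int (Polynomial.coeff q 0) :: complex) < 1"
    unfolding e1[symmetric] e2 .
  then have "\<bar>real_of_int (Polynomial.coeff q 0)\<bar> < 1" by (simp only: norm_of_int)
  then have "\<bar>Polynomial.coeff q 0\<bar> < 1" by linarith
  then have "ipoly q (0 :: complex) = 0" by (simp add: poly_0_coeff_0 coeff_map_poly)
  from q(3)[OF this] obtain z :: complex where "ipoly p z = 0" "0 = ipoly f z" by blast
  then show False using ipoly_eq_0_of_degree_less[OF irreducible monic deg] f0 by simp
qed

lemma pisot_set_gen_field_nonempty: "pisot_set (gen_field \<theta>) \<noteq> {}"
proof -
  have "card other_roots < degree p" using card_other_roots degree_pos by simp
  then obtain f where f: "f \<noteq> 0" "degree f < degree p"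
    and small: "\<And>z. z \<in> other_roots \<Longrightarrow> cmod (ipoly f z) < 1/4"
    using small_int_poly_on_cnj_closed[OF finite_other_roots cnj_other_roots] by blast
  have "cmod (ipoly f (complex_of_real \<theta>)) \<ge> 1"
    using ex_conjugate_norm_ge_1[OF f] small unfolding other_roots_def by force
  then have "(ipoly f \<theta>)\<^sup>2 \<ge> 1"
    by (simp add: ipoly_complex_of_real abs_le_square_iff[of 1, simplified])
  define g where "g = Polynomial.smult 2 (f ^ 2)"
  have g: "ipoly g x = 2 * (ipoly f x)\<^sup>2" for x :: "'a::comm_ring_1"
    unfolding g_def by (simp add: hom_distribs)
  have "ipoly g \<theta> \<in> pisot_set (gen_field \<theta>)"
  proof (rule ipoly_mem_pisot_set)
    show "ipoly g \<theta> > 1" using \<open>(ipoly f \<theta>)\<^sup>2 \<ge> 1\<close> by (simp add: g)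
    fix z assume "z \<in> other_roots"
    then have "cmod (ipoly f z) ^ 2 \<le> (1/4) ^ 2"
      using small by (intro power_mono) (auto simp: less_imp_le)
    also have "\<dots> = 1/16" by (simp add: power2_eq_square)
    finally have "cmod (ipoly f z) ^ 2 \<le> 1/16" .
    moreover have "cmod (ipoly g z) = 2 * cmod (ipoly f z) ^ 2" by (simp add: g norm_mult norm_power)
    ultimately show "cmod (ipoly g z) < 1" by linarith
  qed
  then show ?thesis by blast
qed

end

section \<open>Differences of Pisot numbers\<close>

lemma ipoly_power_diff: "ipoly (Polynomial.monom 1 (a + b) - Polynomial.monom 1 a) x = x ^ (a + b) - x ^ a"
  by (simp add: hom_distribs poly_monom map_poly_monom)

lemma MOST_power_le:
  fixes x :: real
  assumes "0 \<le> x" "x < 1" "\<epsilon> > 0"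
  shows "\<forall>\<^sub>\<infinity>n. x ^ n \<le> \<epsilon>"
proof -
  have "eventually (\<lambda>n. x ^ n < \<epsilon>) sequentially"
    using assms by (intro order_tendstoD(2)[OF LIMSEQ_power_zero]) auto
  then show ?thesis
    unfolding cofinite_eq_sequentially by (rule eventually_mono) simp
qed

lemma MOST_power_ge:
  fixes x :: real
  assumes "x > 1"
  shows "\<forall>\<^sub>\<infinity>n. x ^ n \<ge> y"
proof -
  obtain m where "y < x ^ m" using real_arch_pow[OF assms] by blast
  moreover have "x ^ m \<le> x ^ n" if "n \<ge> m" for n
    using that assms by (intro power_increasing) auto
  ultimately have "\<forall>n\<ge>m. x ^ n \<ge> y" by (meson less_le_trans less_imp_le)
  then show ?thesis unfolding MOST_nat_le by blast
qed

locale pisot_root = alg_int +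
  assumes gt_1: "\<theta> > 1" and other_roots_small: "z \<in> other_roots \<Longrightarrow> cmod z < 1"
begin

lemma other_roots_nonzero: "z \<in> other_roots \<Longrightarrow> z \<noteq> 0"
  using zero_not_in_other_roots gt_1 by auto

lemma MOST_all_other_roots:
  assumes "\<And>z. z \<in> other_roots \<Longrightarrow> \<forall>\<^sub>\<infinity>n. P z n"
  shows "\<forall>\<^sub>\<infinity>n. \<forall>z\<in>other_roots. P z n"
  by (rule eventually_ball_finite[OF finite_other_roots]) (use assms in blast)

text \<open>Good exponents make \<open>\<alpha> = \<theta>\<^sup>a\<^sup>+\<^sup>b - \<theta>\<^sup>a\<close>, \<open>\<alpha> + 1\<close> and \<open>\<theta> + \<alpha>\<close> Pisot numbers: the conjugates
  \<open>z\<^sup>a\<^sup>+\<^sup>b - z\<^sup>a\<close> of \<open>\<alpha>\<close> are small and, by the condition on the argument of \<open>z\<^sup>a\<close>, close to the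
  negative real axis.\<close>

definition good_exponents :: "nat \<Rightarrow> nat \<Rightarrow> bool" where
  "good_exponents b a \<longleftrightarrow> \<theta> ^ b \<ge> 3 \<and>
     (\<forall>z\<in>other_roots. cmod z ^ b \<le> 1/8 \<and> cmod z ^ a \<le> 1/16 \<and> cmod z + 2 * cmod z ^ a < 1 \<and>
        Re ((z / of_real (cmod z)) ^ a) \<ge> 4/5)"

lemma good_exponents_base: "good_exponents b a \<Longrightarrow> \<theta> ^ b \<ge> 3"
  unfolding good_exponents_def by blast

lemma good_exponents_estimates:
  assumes "good_exponents b a" and z: "z \<in> other_roots"
  shows "Re (z ^ a - z ^ (a + b)) \<ge> 27/40 * cmod z ^ a"
    "cmod (z ^ a - z ^ (a + b)) \<le> 9/8 * cmod z ^ a"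
    "cmod (z ^ a - z ^ (a + b)) < 1"
    "cmod (1 - (z ^ a - z ^ (a + b))) < 1"
proof -
  have "cmod z ^ b \<le> 1/8" "cmod z ^ a \<le> 1/16" "Re ((z / of_real (cmod z)) ^ a) \<ge> 4/5"
    using assms unfolding good_exponents_def by blast+
  from power_diff_estimates[OF other_roots_nonzero[OF z] this]
  show "Re (z ^ a - z ^ (a + b)) \<ge> 27/40 * cmod z ^ a"
    "cmod (z ^ a - z ^ (a + b)) \<le> 9/8 * cmod z ^ a"
    "cmod (z ^ a - z ^ (a + b)) < 1"
    "cmod (1 - (z ^ a - z ^ (a + b))) < 1" .
qed

lemma ex_base_exponent: "\<exists>b. \<theta> ^ b \<ge> 3 \<and> (\<forall>z\<in>other_roots. cmod z ^ b \<le> 1/8)"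
proof -
  have "\<forall>\<^sub>\<infinity>b. \<forall>z\<in>other_roots. cmod z ^ b \<le> 1/8"
    by (rule MOST_all_other_roots) (intro MOST_power_le other_roots_small; simp)
  then have "\<forall>\<^sub>\<infinity>b. \<theta> ^ b \<ge> 3 \<and> (\<forall>z\<in>other_roots. cmod z ^ b \<le> 1/8)"
    using MOST_power_ge[OF gt_1] by (intro MOST_conjI)
  then obtain m where "\<forall>n\<ge>m. \<theta> ^ n \<ge> 3 \<and> (\<forall>z\<in>other_roots. cmod z ^ n \<le> 1/8)"
    unfolding MOST_nat_le by blast
  then show ?thesis by blast
qed

lemma MOST_small_exponent:
  "\<forall>\<^sub>\<infinity>a. \<forall>z\<in>other_roots. cmod z ^ a \<le> 1/16 \<and> cmod z + 2 * cmod z ^ a < 1"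
proof (rule MOST_all_other_roots)
  fix z assume z: "z \<in> other_roots"
  have "\<forall>\<^sub>\<infinity>a. cmod z ^ a \<le> 1/16 \<and> cmod z ^ a \<le> (1 - cmod z) / 3"
    using other_roots_small[OF z] by (intro MOST_conjI MOST_power_le) auto
  then show "\<forall>\<^sub>\<infinity>a. cmod z ^ a \<le> 1/16 \<and> cmod z + 2 * cmod z ^ a < 1"
  proof (rule MOST_mono)
    fix a assume "cmod z ^ a \<le> 1/16 \<and> cmod z ^ a \<le> (1 - cmod z) / 3"
    then have "cmod z ^ a \<le> 1/16" "cmod z ^ a * 3 \<le> 1 - cmod z" by (simp_all add: pos_le_divide_eq)
    then show "cmod z ^ a \<le> 1/16 \<and> cmod z + 2 * cmod z ^ a < 1"
      using other_roots_small[OF z] by linarith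
  qed
qed

lemma INFM_directions_near_1: "\<exists>\<^sub>\<infinity>a. \<forall>z\<in>other_roots. Re ((z / of_real (cmod z)) ^ a) \<ge> 4/5"
proof -
  define U where "U = (\<lambda>z. z / of_real (cmod z)) ` other_roots"
  have "finite U" unfolding U_def using finite_other_roots by simp
  moreover have "cmod u = 1" if "u \<in> U" for u
    using that other_roots_nonzero unfolding U_def by (auto simp: norm_divide)
  ultimately have "\<exists>\<^sub>\<infinity>a. \<forall>u\<in>U. Re (u ^ a) \<ge> 4/5" by (rule infinitely_many_powers_near_1)
  then show ?thesis unfolding U_def by simp
qed

lemma ex_good_exponents: "\<exists>b. \<exists>\<^sub>\<infinity>a. good_exponents b a"
proof -
  obtain b where b: "\<theta> ^ b \<ge> 3" "\<forall>z\<in>other_roots. cmod z ^ b \<le> 1/8"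
    using ex_base_exponent by blast
  have "\<exists>\<^sub>\<infinity>a. (\<forall>z\<in>other_roots. Re ((z / of_real (cmod z)) ^ a) \<ge> 4/5) \<and>
      (\<forall>z\<in>other_roots. cmod z ^ a \<le> 1/16 \<and> cmod z + 2 * cmod z ^ a < 1)"
    by (rule INFM_conjI[OF INFM_directions_near_1 MOST_small_exponent])
  then have "\<exists>\<^sub>\<infinity>a. good_exponents b a"
    by (rule INFM_mono) (use b in \<open>auto simp: good_exponents_def\<close>)
  then show ?thesis by blast
qed

lemma power_diff_ge_2:
  assumes "\<theta> ^ b \<ge> 3"
  shows "\<theta> ^ (a + b) - \<theta> ^ a \<ge> 2"
proof -
  have "\<theta> ^ a * (\<theta> ^ b - 1) \<ge> 1 * 2" using gt_1 assms by (intro mult_mono) auto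
  then show ?thesis by (simp add: power_add algebra_simps)
qed

lemma good_exponents_pisot:
  assumes good: "good_exponents b a"
  shows "\<theta> ^ (a + b) - \<theta> ^ a \<in> pisot_set (gen_field \<theta>)"
    "\<theta> ^ (a + b) - \<theta> ^ a + 1 \<in> pisot_set (gen_field \<theta>)"
    "\<theta> + (\<theta> ^ (a + b) - \<theta> ^ a) \<in> pisot_set (gen_field \<theta>)"
proof -
  define f :: "int poly" where "f = Polynomial.monom 1 (a + b) - Polynomial.monom 1 a"
  have f: "ipoly f x = x ^ (a + b) - x ^ a" for x :: "'a::comm_ring_1"
    unfolding f_def by (rule ipoly_power_diff)
  have ge_2: "\<theta> ^ (a + b) - \<theta> ^ a \<ge> 2" by (rule power_diff_ge_2[OF good_exponents_base[OF good]])
  note est = good_exponents_estimates(3,4,2)[OF good]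
  show "\<theta> ^ (a + b) - \<theta> ^ a \<in> pisot_set (gen_field \<theta>)"
    using ipoly_mem_pisot_set[of f] ge_2 est(1) by (simp add: f norm_minus_commute)
  show "\<theta> ^ (a + b) - \<theta> ^ a + 1 \<in> pisot_set (gen_field \<theta>)"
    using ipoly_mem_pisot_set[of "f + 1"] ge_2 est(2) by (simp add: f hom_distribs algebra_simps)
  have "cmod (z + (z ^ (a + b) - z ^ a)) < 1" if z: "z \<in> other_roots" for z
  proof -
    have "cmod (z + (z ^ (a + b) - z ^ a)) \<le> cmod z + cmod (z ^ a - z ^ (a + b))"
      using norm_triangle_ineq[of z "z ^ (a + b) - z ^ a"] norm_minus_commute[of "z ^ (a + b)" "z ^ a"]
      by simp
    also have "\<dots> \<le> cmod z + 2 * cmod z ^ a"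
      using est(3)[OF z] zero_le_power[OF norm_ge_zero, of z a] by linarith
    also have "\<dots> < 1" using good z unfolding good_exponents_def by blast
    finally show ?thesis .
  qed
  then show "\<theta> + (\<theta> ^ (a + b) - \<theta> ^ a) \<in> pisot_set (gen_field \<theta>)"
    using ipoly_mem_pisot_set[of "[:0, 1:] + f"] ge_2 gt_1 by (simp add: f hom_distribs)
qed

lemma one_mem_diff_set: "1 \<in> diff_set (gen_field \<theta>)"
proof -
  obtain b a where "good_exponents b a" using ex_good_exponents INFM_EX by blast
  then show ?thesis
    using good_exponents_pisot(1,2) unfolding diff_set_def
    by (intro CollectI exI[of _ "\<theta> ^ (a + b) - \<theta> ^ a + 1"] exI[of _ "\<theta> ^ (a + b) - \<theta> ^ a"]) auto
qed

lemma self_mem_diff_set: "\<theta> \<in> diff_set (gen_field \<theta>)"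
proof -
  obtain b a where "good_exponents b a" using ex_good_exponents INFM_EX by blast
  then show ?thesis
    using good_exponents_pisot(1,3) gt_1 unfolding diff_set_def
    by (intro CollectI exI[of _ "\<theta> + (\<theta> ^ (a + b) - \<theta> ^ a)"] exI[of _ "\<theta> ^ (a + b) - \<theta> ^ a"]) auto
qed

lemma power_diffs_gap:
  assumes b3: "\<theta> ^ b \<ge> 3" and a': "a + b \<le> a'"
  shows "(\<theta> ^ (a' + b) - \<theta> ^ a' + 1) - (\<theta> ^ (a + b) - \<theta> ^ a) \<ge> 5"
proof -
  have "\<theta> ^ (a' - a) \<ge> \<theta> ^ b" using a' gt_1 by (intro power_increasing) auto
  then have "\<theta> ^ (a' - a) - 1 \<ge> 2" using b3 by linarith
  then have "\<theta> ^ a * (\<theta> ^ (a' - a) - 1) \<ge> 1 * 2"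
    using gt_1 by (intro mult_mono) auto
  then have "\<theta> ^ a' - \<theta> ^ a \<ge> 2" using a' by (simp add: algebra_simps flip: power_add)
  moreover have "\<theta> ^ b - 1 \<ge> 2" using b3 by simp
  ultimately have "(\<theta> ^ b - 1) * (\<theta> ^ a' - \<theta> ^ a) \<ge> 2 * 2" by (intro mult_mono) auto
  then show ?thesis by (simp add: power_add algebra_simps)
qed

text \<open>With \<open>u\<close> in the lens of \<open>power_diff_estimates\<close> and \<open>|u'| \<le> |u|/2\<close>, the real part of
  \<open>1 + u - u'\<close> exceeds \<open>1\<close>, while all of \<open>u\<close> and \<open>u'\<close> are tiny.\<close>

lemma good_exponents_conjugate_estimates:
  assumes good: "good_exponents b a" "good_exponents b a'"
    and z0: "z0 \<in> other_roots" and half: "cmod z0 ^ (a' - a) \<le> 1/2" and a': "a \<le> a'"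
  defines "w \<equiv> 1 + (z0 ^ a - z0 ^ (a + b)) - (z0 ^ a' - z0 ^ (a' + b))"
  shows "1 < cmod w" "cmod w < 2"
proof -
  define u where "u = z0 ^ a - z0 ^ (a + b)"
  define u' where "u' = z0 ^ a' - z0 ^ (a' + b)"
  define s where "s = cmod z0 ^ a"
  have s0: "s > 0" unfolding s_def using other_roots_nonzero[OF z0] by simp
  have "cmod z0 ^ a' = s * cmod z0 ^ (a' - a)" unfolding s_def using a' by (simp flip: power_add)
  also have "\<dots> \<le> s / 2" using half s0 by (simp add: mult_left_mono)
  finally have s': "cmod z0 ^ a' \<le> s / 2" .
  have u: "Re u \<ge> 27/40 * s" "cmod u \<le> 9/8 * s"
    using good_exponents_estimates(1,2)[OF good(1) z0] unfolding u_def s_def by auto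
  have "s \<le> 1/16" using good(1) z0 unfolding good_exponents_def s_def by blast
  have u': "cmod u' \<le> 9/8 * cmod z0 ^ a'"
    using good_exponents_estimates(2)[OF good(2) z0] unfolding u'_def .
  have "Re u' \<le> cmod u'" using abs_Re_le_cmod[of u'] by linarith
  then have "Re w > 1" using u u' s' s0 unfolding w_def u_def u'_def by simp
  then show "1 < cmod w" using abs_Re_le_cmod[of w] by linarith
  have "cmod w \<le> 1 + cmod u + cmod u'"
    using norm_triangle_ineq4[of "1 + u" u'] norm_triangle_ineq[of 1 u] unfolding w_def u_def u'_def by simp
  then show "cmod w < 2" using u u' s' \<open>s \<le> 1/16\<close> by linarith
qed

lemma good_exponents_diff_not_pisot:
  assumes good: "good_exponents b a" "good_exponents b a'"
    and z0: "z0 \<in> other_roots" and half: "cmod z0 ^ (a' - a) \<le> 1/2" and a': "a + b \<le> a'"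
  shows "\<not> pisot ((\<theta> ^ (a' + b) - \<theta> ^ a' + 1) - (\<theta> ^ (a + b) - \<theta> ^ a))"
proof
  define d where "d = (\<theta> ^ (a' + b) - \<theta> ^ a' + 1) - (\<theta> ^ (a + b) - \<theta> ^ a)"
  define w where "w = 1 + (z0 ^ a - z0 ^ (a + b)) - (z0 ^ a' - z0 ^ (a' + b))"
  define f :: "nat \<Rightarrow> int poly" where "f k = Polynomial.monom 1 (k + b) - Polynomial.monom 1 k" for k
  have f: "ipoly (f k) x = x ^ (k + b) - x ^ k" for k and x :: "'a::comm_ring_1"
    unfolding f_def by (rule ipoly_power_diff)
  define g where "g = f a' + 1 - f a"
  have g: "ipoly g x = (x ^ (a' + b) - x ^ a' + 1) - (x ^ (a + b) - x ^ a)" for x :: "'a::comm_ring_1"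
    unfolding g_def by (simp add: hom_distribs f)
  assume "pisot d"
  then have "pisot (ipoly g \<theta>)" unfolding d_def by (simp add: g)
  then have "w = complex_of_real d \<or> cmod w < 1"
    using pisot_ipoly_conjugate[of g z0] z0 unfolding other_roots_def d_def w_def
    by (simp add: g algebra_simps)
  moreover have "1 < cmod w" "cmod w < 2"
    using good_exponents_conjugate_estimates[OF good z0 half] a' unfolding w_def by auto
  moreover have "d \<ge> 5" unfolding d_def by (rule power_diffs_gap[OF good_exponents_base[OF good(1)] a'])
  ultimately show False by auto
qed

lemma infinite_diff_set_minus_pisot_set:
  assumes irrational: "\<theta> \<notin> \<rat>"
  shows "infinite (diff_set (gen_field \<theta>) - pisot_set (gen_field \<theta>))"
proof -
  obtain b where "\<exists>\<^sub>\<infinity>a. good_exponents b a" using ex_good_exponents by blast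
  then obtain a where good: "good_exponents b a" using INFM_EX by blast
  obtain z0 where z0: "z0 \<in> other_roots" using Rats_if_no_other_roots irrational by blast
  obtain m where m: "\<And>n. n \<ge> m \<Longrightarrow> cmod z0 ^ n \<le> 1/2"
    using MOST_power_le[of "cmod z0" "1/2"] other_roots_small[OF z0] unfolding MOST_nat_le by auto
  define \<alpha> where "\<alpha> a = \<theta> ^ (a + b) - \<theta> ^ a" for a
  have \<alpha>_eq: "\<alpha> k = \<theta> ^ k * (\<theta> ^ b - 1)" for k unfolding \<alpha>_def by (simp add: power_add algebra_simps)
  have b_pos: "\<theta> ^ b - 1 > 0" using good_exponents_base[OF good] by simp
  define A where "A = {a'. good_exponents b a' \<and> a + b + m \<le> a'}"
  have "\<exists>\<^sub>\<infinity>a'. good_exponents b a' \<and> a + b + m \<le> a'"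
    using \<open>\<exists>\<^sub>\<infinity>a. good_exponents b a\<close> by (rule INFM_conjI) (auto simp: MOST_nat_le)
  then have "infinite A" unfolding A_def INFM_iff_infinite .
  moreover have "inj_on (\<lambda>a'. \<alpha> a' + 1 - \<alpha> a) A"
  proof -
    have "\<theta> ^ x * (\<theta> ^ b - 1) < \<theta> ^ y * (\<theta> ^ b - 1)" if "x < y" for x y
      by (intro mult_strict_right_mono power_strict_increasing that gt_1 b_pos)
    then have "strict_mono (\<lambda>k. \<theta> ^ k * (\<theta> ^ b - 1))" by (rule strict_monoI)
    then have "inj (\<lambda>k. \<theta> ^ k * (\<theta> ^ b - 1))" by (rule strict_mono_imp_inj_on)
    then show ?thesis unfolding \<alpha>_eq by (auto simp: inj_on_def)
  qed
  moreover have "(\<lambda>a'. \<alpha> a' + 1 - \<alpha> a) ` A \<subseteq> diff_set (gen_field \<theta>) - pisot_set (gen_field \<theta>)"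
  proof
    fix d assume "d \<in> (\<lambda>a'. \<alpha> a' + 1 - \<alpha> a) ` A"
    then obtain a' where a': "good_exponents b a'" "a + b + m \<le> a'" and d: "d = \<alpha> a' + 1 - \<alpha> a"
      unfolding A_def by blast
    have "\<not> pisot d"
      unfolding d \<alpha>_def using good_exponents_diff_not_pisot[OF good a'(1) z0 m] a'(2) by simp
    moreover have "\<alpha> a' + 1 - \<alpha> a \<ge> 5"
      unfolding \<alpha>_def using power_diffs_gap[OF good_exponents_base[OF good]] a'(2) by simp
    moreover have "\<alpha> a' + 1 \<in> pisot_set (gen_field \<theta>)" "\<alpha> a \<in> pisot_set (gen_field \<theta>)"
      unfolding \<alpha>_def using good_exponents_pisot(1,2) good a'(1) by blast+
    ultimately have "d \<in> diff_set (gen_field \<theta>)"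
      unfolding diff_set_def d by (intro CollectI exI[of _ "\<alpha> a' + 1"] exI[of _ "\<alpha> a"]) auto
    with \<open>\<not> pisot d\<close> show "d \<in> diff_set (gen_field \<theta>) - pisot_set (gen_field \<theta>)"
      unfolding pisot_set_def by blast
  qed
  ultimately show ?thesis
    by (meson finite_imageD rev_finite_subset)
qed

end

lemma pisot_set_pisot_root:
  assumes "\<alpha> \<in> pisot_set K"
  obtains q where "pisot_root q \<alpha>" "gen_field \<alpha> = K"
proof -
  obtain q where q: "lead_coeff q = 1" "irreducible q" "ipoly q \<alpha> = 0"
    "\<And>z. ipoly q z = 0 \<Longrightarrow> z \<noteq> complex_of_real \<alpha> \<Longrightarrow> cmod z < 1" and gt_1: "\<alpha> > 1"
    using assms unfolding pisot_set_def pisot_def by blast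
  interpret alg_int q \<alpha> using q by unfold_locales
  have "pisot_root q \<alpha>" using gt_1 q(4) by unfold_locales (simp_all add: other_roots_def)
  then show ?thesis using that assms unfolding pisot_set_def by blast
qed

lemma pisot_set_subset_diff_set: "pisot_set K \<subseteq> diff_set K"
proof
  fix \<beta> assume "\<beta> \<in> pisot_set K"
  then obtain q where "pisot_root q \<beta>" "gen_field \<beta> = K" by (rule pisot_set_pisot_root)
  then show "\<beta> \<in> diff_set K" using pisot_root.self_mem_diff_set by blast
qed

section \<open>Discreteness of the Pisot numbers of a number field\<close>

lemma norm_coeff_prod_linear_factors:
  fixes as :: "complex list"
  assumes "\<And>a. a \<in> set as \<Longrightarrow> cmod a \<le> T" "T \<ge> 1"
  shows "cmod (Polynomial.coeff (\<Prod>a\<leftarrow>as. [:-a, 1:]) i) \<le> (2 * T) ^ length as"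
  using assms
proof (induction as arbitrary: i)
  case Nil then show ?case by (cases i) auto
next
  case (Cons a as)
  let ?q = "\<Prod>a\<leftarrow>as. [:-a, 1:]"
  have IH: "cmod (Polynomial.coeff ?q j) \<le> (2 * T) ^ length as" for j using Cons by auto
  have aT: "cmod a \<le> T" using Cons by auto
  have coeff: "Polynomial.coeff ([:-a, 1:] * ?q) i =
      (if i = 0 then 0 else Polynomial.coeff ?q (i - 1)) - a * Polynomial.coeff ?q i"
    by (cases i) (auto simp: coeff_pCons algebra_simps)
  have "cmod (if i = 0 then 0 else Polynomial.coeff ?q (i - 1)) \<le> (2 * T) ^ length as"
    using IH Cons.prems(2) by (cases "i = 0") auto
  moreover have "cmod (a * Polynomial.coeff ?q i) \<le> T * (2 * T) ^ length as"
    unfolding norm_mult using aT IH Cons.prems(2) by (intro mult_mono) auto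
  ultimately have "cmod (Polynomial.coeff ([:-a, 1:] * ?q) i) \<le> (2 * T) ^ length as + T * (2 * T) ^ length as"
    unfolding coeff using norm_triangle_ineq4 by (smt (verit))
  also have "\<dots> \<le> (2 * T) ^ length (a # as)"
  proof -
    have "(2 * T) ^ length as * (1 + T) \<le> (2 * T) ^ length as * (2 * T)"
      using Cons.prems(2) by (intro mult_left_mono) auto
    then show ?thesis by (simp add: algebra_simps)
  qed
  finally show ?case by simp
qed

lemma monic_int_poly_coeff_bound:
  fixes p :: "int poly" and T :: real
  assumes mon: "lead_coeff p = 1" and T: "T \<ge> 1"
    and roots: "\<And>z :: complex. ipoly p z = 0 \<Longrightarrow> cmod z \<le> T"
  shows "\<bar>Polynomial.coeff p i\<bar> \<le> (2 * T) ^ degree p"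
proof -
  let ?pc = "of_int_poly p :: complex poly"
  obtain as where as: "Polynomial.smult (lead_coeff ?pc) (\<Prod>a\<leftarrow>as. [:- a, 1:]) = ?pc" "length as = degree ?pc"
    using fundamental_theorem_algebra_factorized[of ?pc] by blast
  have pc: "?pc = (\<Prod>a\<leftarrow>as. [:- a, 1:])" using as(1) mon by simp
  have "cmod a \<le> T" if "a \<in> set as" for a
    using roots[of a] pc linear_poly_root[OF that] by simp
  then have "cmod (Polynomial.coeff ?pc i) \<le> (2 * T) ^ length as"
    unfolding pc by (intro norm_coeff_prod_linear_factors T) auto
  then show ?thesis using as(2) by (simp add: coeff_map_poly)
qed

lemma finite_int_polys_bounded:
  "finite {p :: int poly. degree p \<le> N \<and> (\<forall>i. \<bar>Polynomial.coeff p i\<bar> \<le> B)}"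
proof -
  let ?S = "{p :: int poly. degree p \<le> N \<and> (\<forall>i. \<bar>Polynomial.coeff p i\<bar> \<le> B)}"
  define h where "h p = restrict (Polynomial.coeff p) {..N}" for p :: "int poly"
  have "h p \<in> PiE {..N} (\<lambda>_. {-B..B})" if p: "p \<in> ?S" for p
  proof -
    have "Polynomial.coeff p i \<in> {-B..B}" for i
      using p abs_le_iff[of "Polynomial.coeff p i" B] by auto
    then show ?thesis unfolding h_def by (simp add: restrict_PiE_iff)
  qed
  then have "h ` ?S \<subseteq> PiE {..N} (\<lambda>_. {-B..B})" by blast
  then have "finite (h ` ?S)" by (rule finite_subset) (intro finite_PiE; simp)
  moreover have "inj_on h ?S"
  proof (rule inj_onI)
    fix p q assume p: "p \<in> ?S" and q: "q \<in> ?S" and e: "h p = h q"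
    show "p = q"
    proof (rule poly_eqI)
      fix i show "Polynomial.coeff p i = Polynomial.coeff q i"
        using fun_cong[OF e, of i] p q unfolding h_def by (cases "i \<le> N") (auto simp: coeff_eq_0)
    qed
  qed
  ultimately show ?thesis by (rule finite_imageD)
qed

lemma pisot_set_degree_bound:
  assumes K: "real_number_field K"
  obtains N where "\<And>x p. x \<in> pisot_set K \<Longrightarrow> irreducible p \<Longrightarrow> lead_coeff p = 1 \<Longrightarrow>
    ipoly p x = 0 \<Longrightarrow> degree p \<le> N"
proof -
  obtain N where N: "\<And>x. x \<in> K \<Longrightarrow>
      \<exists>P :: rat poly. lead_coeff P = 1 \<and> degree P = N \<and> poly (map_poly of_rat P) x = 0"
    using real_number_field_degree_bound[OF K] by blast
  have "degree p \<le> N" if x: "x \<in> pisot_set K" and irr: "irreducible p" and mon: "lead_coeff p = 1"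
    and px: "ipoly p x = 0" for x p
  proof -
    obtain P :: "rat poly" where P: "lead_coeff P = 1" "degree P = N" "poly (map_poly of_rat P) x = 0"
      using N x unfolding pisot_set_def by blast
    have "poly (map_poly of_rat (of_int_poly p :: rat poly)) (complex_of_real x) = 0"
      using px by (simp add: of_rat_of_int_poly ipoly_complex_of_real)
    moreover have "poly (map_poly of_rat P) (complex_of_real x) = 0"
      using P(3) by (simp add: poly_of_rat_complex_of_real)
    ultimately have "of_int_poly p dvd P"
      by (rule irreducible_rat_poly_dvd[OF irreducible_of_int_poly[OF irr mon]])
    then have "degree (of_int_poly p :: rat poly) \<le> degree P"
      using P(1) by (intro dvd_imp_degree_le) auto
    then show ?thesis using P(2) by simp
  qed
  then show ?thesis using that by blast
qed

text \<open>A Pisot number below \<open>T\<close> is a root of a monic integer polynomial of bounded degree whose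
  roots are bounded by \<open>max T 1\<close>; there are finitely many such polynomials.\<close>

lemma finite_pisot_set_below:
  assumes K: "real_number_field K"
  shows "finite (pisot_set K \<inter> {..<T})"
proof -
  obtain N where N: "\<And>x p. x \<in> pisot_set K \<Longrightarrow> irreducible p \<Longrightarrow> lead_coeff p = 1 \<Longrightarrow>
      ipoly p x = 0 \<Longrightarrow> degree p \<le> N"
    using pisot_set_degree_bound[OF K] by blast
  define T1 where "T1 = max T 1"
  define B where "B = \<lceil>(2 * T1) ^ N\<rceil>"
  define S where "S = {p :: int poly. degree p \<le> N \<and> (\<forall>i. \<bar>Polynomial.coeff p i\<bar> \<le> B) \<and> lead_coeff p = 1}"
  have "finite S" unfolding S_def by (rule finite_subset[OF _ finite_int_polys_bounded]) auto
  then have fin: "finite (\<Union>p\<in>S. {x :: real. ipoly p x = 0})"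
    unfolding S_def by (intro finite_UN_I poly_roots_finite) auto
  have "x \<in> (\<Union>p\<in>S. {x. ipoly p x = 0})" if x: "x \<in> pisot_set K" "x < T" for x
  proof -
    obtain p where p: "lead_coeff p = 1" "irreducible p" "ipoly p x = 0"
      "\<And>z. ipoly p z = 0 \<Longrightarrow> z \<noteq> complex_of_real x \<Longrightarrow> cmod z < 1" and x1: "x > 1"
      using x unfolding pisot_set_def pisot_def by blast
    have deg: "degree p \<le> N" using N[OF x(1) p(2,1,3)] .
    have "cmod z \<le> T1" if "ipoly p z = 0" for z
      using p(4)[OF that] x x1 unfolding T1_def by (cases "z = complex_of_real x") auto
    then have "real_of_int \<bar>Polynomial.coeff p i\<bar> \<le> (2 * T1) ^ degree p" for i
      using monic_int_poly_coeff_bound[OF p(1)] unfolding T1_def by simp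
    also have "(2 * T1) ^ degree p \<le> (2 * T1) ^ N" using deg unfolding T1_def by (intro power_increasing) auto
    also have "\<dots> \<le> B" unfolding B_def by simp
    finally have "real_of_int \<bar>Polynomial.coeff p i\<bar> \<le> real_of_int B" for i .
    then have "\<bar>Polynomial.coeff p i\<bar> \<le> B" for i by (simp only: of_int_le_iff)
    then have "p \<in> S" unfolding S_def using deg p(1) by simp
    then show ?thesis using p(3) by blast
  qed
  then show ?thesis by (intro finite_subset[OF _ fin]) auto
qed

section \<open>Gaps between consecutive Pisot numbers\<close>

lemma diff_multiple_of_gap:
  assumes K: "real_number_field K" and G: "gap_set K \<subseteq> {d}"
  shows "\<alpha> \<in> pisot_set K \<Longrightarrow> \<beta> \<in> pisot_set K \<Longrightarrow> \<alpha> < \<beta> \<Longrightarrow> \<exists>k::nat. k \<ge> 1 \<and> \<beta> - \<alpha> = real k * d"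
proof (induction "card (pisot_set K \<inter> {\<alpha><..<\<beta>})" arbitrary: \<alpha> rule: less_induct)
  case less
  define S where "S = pisot_set K \<inter> {\<alpha><..<\<beta>}"
  have finS: "finite S" unfolding S_def
    by (rule finite_subset[OF _ finite_pisot_set_below[OF K, of \<beta>]]) auto
  show ?case
  proof (cases "S = {}")
    case True
    then have "\<beta> - \<alpha> \<in> gap_set K" unfolding gap_set_def S_def
      by (intro CollectI exI[of _ \<alpha>] exI[of _ \<beta>]) (use less.prems in auto)
    then show ?thesis using G by (intro exI[of _ 1]) auto
  next
    case False
    define \<gamma> where "\<gamma> = Min S"
    have \<gamma>: "\<gamma> \<in> pisot_set K" "\<alpha> < \<gamma>" "\<gamma> < \<beta>" using Min_in[OF finS False] unfolding \<gamma>_def S_def by auto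
    have "\<not> (\<exists>y\<in>pisot_set K. \<alpha> < y \<and> y < \<gamma>)"
      using Min_le[OF finS] \<gamma> unfolding \<gamma>_def S_def by force
    then have "\<gamma> - \<alpha> \<in> gap_set K" unfolding gap_set_def
      by (intro CollectI exI[of _ \<alpha>] exI[of _ \<gamma>]) (use less.prems \<gamma> in auto)
    then have gap: "\<gamma> - \<alpha> = d" using G by auto
    have "pisot_set K \<inter> {\<gamma><..<\<beta>} \<subset> S" unfolding S_def using \<gamma> by auto
    then have "card (pisot_set K \<inter> {\<gamma><..<\<beta>}) < card S" by (rule psubset_card_mono[OF finS])
    then obtain k :: nat where "\<beta> - \<gamma> = real k * d"
      using less.hyps[of \<gamma>] \<gamma> less.prems(2) unfolding S_def by blast
    then have "\<beta> - \<alpha> = real (Suc k) * d" using gap by (simp add: algebra_simps)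
    then show ?thesis by (intro exI[of _ "Suc k"]) auto
  qed
qed

lemma gap_set_two_elements:
  assumes K: "real_number_field K" and irrational: "\<theta> \<notin> \<rat>"
    and one: "1 \<in> diff_set K" and \<theta>: "\<theta> \<in> diff_set K"
  shows "\<exists>a\<in>gap_set K. \<exists>b\<in>gap_set K. a \<noteq> b"
proof (rule ccontr)
  assume "\<not> (\<exists>a\<in>gap_set K. \<exists>b\<in>gap_set K. a \<noteq> b)"
  then obtain d where G: "gap_set K \<subseteq> {d}" by blast
  obtain k1 :: nat where k1: "k1 \<ge> 1" "1 = real k1 * d"
    using one diff_multiple_of_gap[OF K G] unfolding diff_set_def by fastforce
  obtain k2 :: nat where k2: "\<theta> = real k2 * d"
    using \<theta> diff_multiple_of_gap[OF K G] unfolding diff_set_def by fastforce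
  have "\<theta> = real k2 / real k1" using k1 k2 by (simp add: field_simps)
  then show False using irrational by simp
qed

theorem theorem1p1:
  fixes K :: "real set"
  assumes "real_number_field K"
  shows "1 \<in> diff_set K \<and>
         pisot_set K \<subset> diff_set K \<and>
         (K \<noteq> \<rat> \<longrightarrow> infinite (diff_set K - pisot_set K) \<and>
           (\<exists>a\<in>gap_set K. \<exists>b\<in>gap_set K. a \<noteq> b))"
proof -
  obtain \<theta> p where "irreducible p" "lead_coeff p = 1" "ipoly p \<theta> = 0" and K: "gen_field \<theta> = K"
    using algebraic_integer_generator[OF assms] by blast
  then interpret alg_int p \<theta> by unfold_locales
  obtain \<alpha> where \<alpha>: "\<alpha> \<in> pisot_set K" using pisot_set_gen_field_nonempty K by blast
  then obtain q where q: "pisot_root q \<alpha>" and K_\<alpha>: "gen_field \<alpha> = K" by (rule pisot_set_pisot_root)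
  interpret \<alpha>: pisot_root q \<alpha> by (rule q)
  have one: "1 \<in> diff_set K" using \<alpha>.one_mem_diff_set K_\<alpha> by simp
  moreover have "1 \<notin> pisot_set K" unfolding pisot_set_def pisot_def by simp
  ultimately have "pisot_set K \<subset> diff_set K" using pisot_set_subset_diff_set by blast
  moreover have "infinite (diff_set K - pisot_set K) \<and> (\<exists>a\<in>gap_set K. \<exists>b\<in>gap_set K. a \<noteq> b)"
    if "K \<noteq> \<rat>"
  proof
    have "\<alpha> \<notin> \<rat>" using that K_\<alpha> gen_field_Rats by auto
    then show "infinite (diff_set K - pisot_set K)" using \<alpha>.infinite_diff_set_minus_pisot_set K_\<alpha> by simp
    show "\<exists>a\<in>gap_set K. \<exists>b\<in>gap_set K. a \<noteq> b"
      using gap_set_two_elements[OF assms \<open>\<alpha> \<notin> \<rat>\<close> one] \<alpha>.self_mem_diff_set K_\<alpha> by simp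
  qed
  ultimately show ?thesis using one by blast
qed

end
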